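(* Let $(A,B)$ be an $m\times n$ bimatrix game such that $P=\{x\in\mathbb R^m\mid x\ge0,\ B^\top x\le\mathbf 1\}$ and $Q=\{y\in\mathbb R^n\mid Ay\le\mathbf 1,\ y\ge0\}$ are polytopes. Let $d=m+n$, $C=\begin{bmatrix}0&A\\ B^\top&0\end{bmatrix}$ (a $d\times d$ matrix), write $C^\top=[c_1\cdots c_d]$, and let $S=\{z\in\mathbb R^d\mid z\ge 0,\ Cz\le\mathbf 1\}$. The following are equivalent: (a) $(A,B)$ is nondegenerate. (b) No point of $P$ has more than $m$ labels and no point of $Q$ has more than $n$ labels. (c) The symmetric game $(C,C^\top)$ is nondegenerate. (d) For no $z\in S$ are more than $d$ of the inequalities $z\ge0$, $Cz\le\mathbf 1$ binding. (e) For every $z\in S$, the row vectors $e_i^\top$ (for $i$ with $z_i=0$) and $c_j^\top$ (for $j$ with $c_j^\top z=1$) are linearly independent. (f) For all $\hat x\in X$ and $\hat y\in Y$: with $I=\mathrm{supp}(\hat x)$, $J=\mathrm{bestresp}(\hat x)$, $K=\mathrm{bestresp}(\hat y)$, $L=\mathrm{supp}(\hat y)$, the columns of the submatrix $B_{IJ}=(b_{ij})_{i\in I,j\in J}$ are linearly independent and the rows of $A_{KL}=(a_{ij})_{i\in K,j\in L}$ are linearly independent. (g) For all $\hat x\in X$ and $\hat y\in Y$: if $I$ is the set of labels of $\hat x$ and $J$ the set of labels of $\hat y$, then $P(I)$ has dimension $m-|I|$ and $Q(J)$ has dimension $n-|J|$. (h) $P$ and $Q$ are simple polytopes, and for each of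 them every inequality in its defining system that is redundant (can be omitted without changing the polytope) is never binding. (i) $P$ and $Q$ are simple polytopes, and every pure strategy of either player that is weakly dominated by or payoff equivalent to a different mixed strategy is strictly dominated.
   Context: $A,B$ real $m\times n$; $\mathbf 1$ all-ones vector; $e_i$ unit vectors; inequalities componentwise. $X=\{x\in\mathbb R^m\mid x\ge0,\sum_ix_i=1\}$, $Y=\{y\in\mathbb R^n\mid y\ge0,\sum_jy_j=1\}$. $\mathrm{supp}(z)=\{k\mid z_k>0\}$; $\mathrm{bestresp}(y)=\{i\mid (Ay)_i=\max_k(Ay)_k\}$ for $y\in Y$; $\mathrm{bestresp}(x)=\{j\mid (B^\top x)_j=\max_k(B^\top x)_k\}$ for $x\in X$. A bimatrix game $(A,B)$ is nondegenerate if $|\mathrm{bestresp}(z)|\le|\mathrm{supp}(z)|$ for all $z\in X$ and all $z\in Y$ (for $(C,C^\top)$ the same definition applies with both strategy sets the simplex in $\mathbb R^d$). Labels: $x\in X$ has label $i\le m$ if $x_i=0$ and label $m+j$ if $j\in\mathrm{bestresp}(x)$; $y\in Y$ has label $m+j$ if $y_j=0$ and label $i\le m$ if $i\in\mathrm{bestresp}(y)$. $x\in P$ has label $i\le m$ if $x_i=0$ and label $m+j$ if $(B^\top x)_j=1$; $y\in Q$ has label $i\le m$ if $(Ay)_i=1$ and label $m+j$ if $y_j=0$. In $S$, $z$ has label $i$ if $z_i=0$ or $c_i^\top z=1$. For $I,J\subseteq\{1,\ldots,m+n\}$: $P(I)=\{x\in P\mid x$ has at least all labels in $I\}$, $Q(J)=\{y\in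 Q\mid y$ has at least all labels in $J\}$; dimension means affine dimension. A $k$-dimensional polytope is simple if no point lies on more than $k$ facets. For player 1, pure strategy $i$ (row $a_i^\top$ of $A$) is weakly dominated by or payoff equivalent to a mixed strategy $x\in X$, $x\ne e_i$, if $a_i^\top\le x^\top A$ componentwise, and strictly dominated if $a_i^\top< x'^\top A$ componentwise for some $x'\in X$; analogously for player 2 with columns of $B$ and $y\in Y$ ($B e_j\le By$, resp. $Be_j<By'$). *)

theory Defs
  imports "HOL-Analysis.Analysis"
begin

text \<open>Labels 1..m are encoded as Inl i, labels m+1..m+n as Inr j, i.e. labels
live in the finite type 'm + 'n (so d = m + n = CARD('m + 'n)).\<close>

definition mixed :: "(real^'k) set" where
  "mixed = {x. (\<forall>i. 0 \<le> x $ i) \<and> (\<Sum>i\<in>UNIV. x $ i) = 1}"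

definition supp :: "real^'k \<Rightarrow> 'k set" where
  "supp z = {k. z $ k > 0}"

definition bestresp1 :: "real^'n^'m \<Rightarrow> real^'n \<Rightarrow> 'm set" where
  "bestresp1 A y = {i. (A *v y) $ i = Max (range (\<lambda>k. (A *v y) $ k))}"

definition bestresp2 :: "real^'n^'m \<Rightarrow> real^'m \<Rightarrow> 'n set" where
  "bestresp2 B x = {j. (transpose B *v x) $ j = Max (range (\<lambda>k. (transpose B *v x) $ k))}"

definition nondegenerate :: "real^'n^'m \<Rightarrow> real^'n^'m \<Rightarrow> bool" where
  "nondegenerate A B \<longleftrightarrow>
     (\<forall>x\<in>mixed. card (bestresp2 B x) \<le> card (supp x)) \<and>
     (\<forall>y\<in>mixed. card (bestresp1 A y) \<le> card (supp y))"

definition labelsX :: "real^'n^'m \<Rightarrow> real^'m \<Rightarrow> ('m + 'n) set" where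
  "labelsX B x = Inl ` {i. x $ i = 0} \<union> Inr ` bestresp2 B x"

definition labelsY :: "real^'n^'m \<Rightarrow> real^'n \<Rightarrow> ('m + 'n) set" where
  "labelsY A y = Inl ` bestresp1 A y \<union> Inr ` {j. y $ j = 0}"

definition Pineq :: "real^'n^'m \<Rightarrow> ('m + 'n) \<Rightarrow> real^'m \<Rightarrow> bool" where
  "Pineq B l x = (case l of Inl i \<Rightarrow> 0 \<le> x $ i | Inr j \<Rightarrow> (transpose B *v x) $ j \<le> 1)"

definition Pbind :: "real^'n^'m \<Rightarrow> ('m + 'n) \<Rightarrow> real^'m \<Rightarrow> bool" where
  "Pbind B l x = (case l of Inl i \<Rightarrow> x $ i = 0 | Inr j \<Rightarrow> (transpose B *v x) $ j = 1)"

definition Qineq :: "real^'n^'m \<Rightarrow> ('m + 'n) \<Rightarrow> real^'n \<Rightarrow> bool" where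
  "Qineq A l y = (case l of Inl i \<Rightarrow> (A *v y) $ i \<le> 1 | Inr j \<Rightarrow> 0 \<le> y $ j)"

definition Qbind :: "real^'n^'m \<Rightarrow> ('m + 'n) \<Rightarrow> real^'n \<Rightarrow> bool" where
  "Qbind A l y = (case l of Inl i \<Rightarrow> (A *v y) $ i = 1 | Inr j \<Rightarrow> y $ j = 0)"

definition Ppoly :: "real^'n^'m \<Rightarrow> (real^'m) set" where
  "Ppoly B = {x. \<forall>l. Pineq B l x}"

definition Qpoly :: "real^'n^'m \<Rightarrow> (real^'n) set" where
  "Qpoly A = {y. \<forall>l. Qineq A l y}"

definition labelsP :: "real^'n^'m \<Rightarrow> real^'m \<Rightarrow> ('m + 'n) set" where
  "labelsP B x = {l. Pbind B l x}"

definition labelsQ :: "real^'n^'m \<Rightarrow> real^'n \<Rightarrow> ('m + 'n) set" where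
  "labelsQ A y = {l. Qbind A l y}"

definition PI :: "real^'n^'m \<Rightarrow> ('m + 'n) set \<Rightarrow> (real^'m) set" where
  "PI B I = {x \<in> Ppoly B. I \<subseteq> labelsP B x}"

definition QJ :: "real^'n^'m \<Rightarrow> ('m + 'n) set \<Rightarrow> (real^'n) set" where
  "QJ A J = {y \<in> Qpoly A. J \<subseteq> labelsQ A y}"

text \<open>C = [[0, A], [B^T, 0]] as a d x d matrix, d = m + n.\<close>
definition Cmat :: "real^'n^'m \<Rightarrow> real^'n^'m \<Rightarrow> real^('m + 'n)^('m + 'n)" where
  "Cmat A B = (\<chi> k l. case (k, l) of
       (Inl i, Inr j) \<Rightarrow> A $ i $ j
     | (Inr j, Inl i) \<Rightarrow> B $ i $ j
     | _ \<Rightarrow> 0)"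

definition Spoly :: "real^'d^'d \<Rightarrow> (real^'d) set" where
  "Spoly C = {z. (\<forall>k. 0 \<le> z $ k) \<and> (\<forall>k. (C *v z) $ k \<le> 1)}"

text \<open>Linear independence of a family (with possible repetitions) of vectors v k, k in K.\<close>
definition lin_indep_family :: "('i \<Rightarrow> 'v::real_vector) \<Rightarrow> 'i set \<Rightarrow> bool" where
  "lin_indep_family v K \<longleftrightarrow>
     (\<forall>c. (\<Sum>k\<in>K. c k *\<^sub>R v k) = 0 \<longrightarrow> (\<forall>k\<in>K. c k = 0))"

definition simple_polytope :: "'a::euclidean_space set \<Rightarrow> bool" where
  "simple_polytope S \<longleftrightarrow> polytope S \<and>
     (\<forall>x\<in>S. int (card {F. F facet_of S \<and> x \<in> F}) \<le> aff_dim S)"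

definition P_redundant :: "real^'n^'m \<Rightarrow> ('m + 'n) \<Rightarrow> bool" where
  "P_redundant B l \<longleftrightarrow> {x. \<forall>l'. l' \<noteq> l \<longrightarrow> Pineq B l' x} = Ppoly B"

definition Q_redundant :: "real^'n^'m \<Rightarrow> ('m + 'n) \<Rightarrow> bool" where
  "Q_redundant A l \<longleftrightarrow> {y. \<forall>l'. l' \<noteq> l \<longrightarrow> Qineq A l' y} = Qpoly A"

end

(*
  Everything reduces to one player's polytope P = {x >= 0, B^T x <= 1}, since Q is P for
  the transpose of A with the two kinds of labels swapped, and S is P x Q. Dividing a mixed
  strategy by its best payoff maps it to a point of P whose binding inequalities are
  exactly its labels, so nondegeneracy says that no point of P has more than m binding
  inequalities. For a bounded polyhedron this is the same as linear independence of the
  binding normals everywhere: from a point with dependent binding normals one can move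
  along the affine space they cut out until a vertex is reached, keeping all of them
  binding, and that vertex then has more than m binding inequalities. Independence gives
  the dimension of P(I), which near a point is an affine space of codimension |I|. Every
  facet through a point lies on the hyperplane of a binding inequality, and distinct
  nonredundant ones give distinct facets, which relates simplicity to the label count; a
  redundant binding inequality again produces a vertex with too many binding
  inequalities. Finally, by separating hyperplane arguments, a binding payoff inequality
  is redundant iff its column is weakly dominated, and it can never bind if the column
  is strictly dominated.
*)

theory Submission
  imports Defs
begin

declare transpose_matrix_vector [simp del]

section \<open>Linear independence of families\<close>

lemma lin_indep_family_imp_inj_on:
  assumes fin: "finite K" and li: "lin_indep_family g K"
  shows "inj_on g K"
proof (rule inj_onI, rule ccontr)
  fix x y assume xy: "x \<in> K" "y \<in> K" "g x = g y" "x \<noteq> y"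
  define c where "c = (\<lambda>k. if k = x then (1::real) else if k = y then -1 else 0)"
  have "(\<Sum>k\<in>K. c k *\<^sub>R g k) = (\<Sum>k\<in>{x,y}. c k *\<^sub>R g k)"
    using fin xy by (intro sum.mono_neutral_right) (auto simp: c_def)
  also have "\<dots> = 0" using xy by (simp add: c_def)
  finally have "c x = 0" using li xy unfolding lin_indep_family_def by blast
  then show False by (simp add: c_def)
qed

lemma lin_indep_family_iff_independent_image:
  fixes g :: "'l \<Rightarrow> 'a::real_vector"
  assumes fin: "finite K"
  shows "lin_indep_family g K \<longleftrightarrow> inj_on g K \<and> independent (g ` K)"
proof
  assume li: "lin_indep_family g K"
  have inj: "inj_on g K" by (rule lin_indep_family_imp_inj_on[OF fin li])
  have "independent (g ` K)"
  proof
    assume "dependent (g ` K)"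
    then obtain u v where u: "v \<in> g ` K" "u v \<noteq> 0" "(\<Sum>v\<in>g ` K. u v *\<^sub>R v) = 0"
      using fin by (auto simp: dependent_finite)
    have "(\<Sum>k\<in>K. u (g k) *\<^sub>R g k) = 0" using u(3) sum.reindex[OF inj, of "\<lambda>v. u v *\<^sub>R v"] by simp
    then have "\<forall>k\<in>K. u (g k) = 0"
      using li[unfolded lin_indep_family_def, rule_format, of "\<lambda>k. u (g k)"] by blast
    then show False using u by auto
  qed
  then show "inj_on g K \<and> independent (g ` K)" using inj by blast
next
  assume "inj_on g K \<and> independent (g ` K)"
  then have inj: "inj_on g K" and ind: "independent (g ` K)" by auto
  show "lin_indep_family g K" unfolding lin_indep_family_def
  proof (intro allI impI ballI)
    fix c k assume c: "(\<Sum>k\<in>K. c k *\<^sub>R g k) = 0" and k: "k \<in> K"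
    define u where "u = c \<circ> the_inv_into K g"
    have "(\<Sum>v\<in>g ` K. u v *\<^sub>R v) = (\<Sum>k\<in>K. c k *\<^sub>R g k)"
      by (simp add: sum.reindex[OF inj] u_def the_inv_into_f_f[OF inj])
    then have "u (g k) = 0" using ind c fin k by (auto simp: dependent_finite)
    then show "c k = 0" by (simp add: u_def the_inv_into_f_f[OF inj k])
  qed
qed

lemma card_eq_dim_if_lin_indep_family:
  fixes g :: "'l \<Rightarrow> 'a::euclidean_space"
  assumes "finite K" "lin_indep_family g K"
  shows "card K = dim (g ` K)"
proof -
  have "inj_on g K" "independent (g ` K)"
    using assms by (simp_all add: lin_indep_family_iff_independent_image)
  then show ?thesis using dim_span_eq_card_independent[of "g ` K"] by (simp add: card_image)
qed

lemma dim_less_card_if_not_lin_indep_family: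
  fixes g :: "'l \<Rightarrow> 'a::euclidean_space"
  assumes fin: "finite K" and nli: "\<not> lin_indep_family g K"
  shows "dim (g ` K) < card K"
proof -
  have le: "dim (g ` K) \<le> card (g ` K)" "card (g ` K) \<le> card K"
    using fin by (simp_all add: dim_le_card' card_image_le)
  have "dim (g ` K) \<noteq> card K"
  proof
    assume eq: "dim (g ` K) = card K"
    then have "card (g ` K) = card K" using le by linarith
    then have inj: "inj_on g K" using fin eq_card_imp_inj_on by blast
    have "dim (g ` K) = card (g ` K)" using eq inj by (simp add: card_image)
    then have "independent (g ` K)"
      using card_eq_dim[of "g ` K" "g ` K"] fin span_superset[of "g ` K"] by simp
    then show False using nli inj fin by (simp add: lin_indep_family_iff_independent_image)
  qed
  then show ?thesis using le by linarith
qed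

lemma dim_Un_le_dim_add_card:
  fixes A B :: "'a::euclidean_space set"
  assumes "finite B"
  shows "dim (A \<union> B) \<le> dim A + card B"
  using assms
proof (induction B rule: finite_induct)
  case (insert b B)
  have "dim (A \<union> insert b B) \<le> dim (A \<union> B) + 1"
    by (simp add: dim_insert)
  then show ?case using insert by simp
qed simp

lemma lin_indep_family_scaleR_iff:
  assumes s: "\<And>k. s k \<noteq> 0"
  shows "lin_indep_family (\<lambda>k. s k *\<^sub>R g k) K \<longleftrightarrow> lin_indep_family g K"
  unfolding lin_indep_family_def
proof (intro iffI allI impI)
  fix c assume l: "\<forall>c. (\<Sum>k\<in>K. c k *\<^sub>R s k *\<^sub>R g k) = 0 \<longrightarrow> (\<forall>k\<in>K. c k = 0)"
    and c: "(\<Sum>k\<in>K. c k *\<^sub>R g k) = 0"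
  have "(\<Sum>k\<in>K. (c k / s k) *\<^sub>R s k *\<^sub>R g k) = 0" using c s by simp
  then show "\<forall>k\<in>K. c k = 0" using l[rule_format, of "\<lambda>k. c k / s k"] s by simp
next
  fix c assume l: "\<forall>c. (\<Sum>k\<in>K. c k *\<^sub>R g k) = 0 \<longrightarrow> (\<forall>k\<in>K. c k = 0)"
    and c: "(\<Sum>k\<in>K. c k *\<^sub>R s k *\<^sub>R g k) = 0"
  have "(\<Sum>k\<in>K. (c k * s k) *\<^sub>R g k) = 0" using c by simp
  then show "\<forall>k\<in>K. c k = 0" using l[rule_format, of "\<lambda>k. c k * s k"] s by simp
qed

section \<open>Polyhedra given by finitely many inequalities\<close>

definition ineqs :: "'l set \<Rightarrow> ('l \<Rightarrow> 'a::euclidean_space) \<Rightarrow> ('l \<Rightarrow> real) \<Rightarrow> 'a set" where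
  "ineqs Ls g h = {z. \<forall>l\<in>Ls. inner (g l) z \<le> h l}"

definition tight :: "'l set \<Rightarrow> ('l \<Rightarrow> 'a::euclidean_space) \<Rightarrow> ('l \<Rightarrow> real) \<Rightarrow> 'a \<Rightarrow> 'l set" where
  "tight Ls g h z = {l\<in>Ls. inner (g l) z = h l}"

lemma convex_ineqs: "convex (ineqs Ls g h)"
proof -
  have "ineqs Ls g h = (\<Inter>l\<in>Ls. {y. inner (g l) y \<le> h l})" by (auto simp: ineqs_def)
  then show ?thesis by (simp add: convex_INT convex_halfspace_le)
qed

lemma open_strict_ineqs:
  assumes "finite Ls"
  shows "open {y. \<forall>l\<in>Ls. inner (g l) y < h l}"
proof -
  have "{y. \<forall>l\<in>Ls. inner (g l) y < h l} = (\<Inter>l\<in>Ls. {y. inner (g l) y < h l})" by auto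
  then show ?thesis using assms by (simp add: open_INT open_halfspace_lt)
qed

lemma interior_ineqs_if_strict:
  fixes g :: "'l::finite \<Rightarrow> 'a::euclidean_space"
  assumes "\<forall>l\<in>Ls. inner (g l) p < h l"
  shows "p \<in> interior (ineqs Ls g h)"
proof (rule interior_maximal[THEN subsetD])
  show "open {y. \<forall>l\<in>Ls. inner (g l) y < h l}" by (rule open_strict_ineqs) simp
  show "{y. \<forall>l\<in>Ls. inner (g l) y < h l} \<subseteq> ineqs Ls g h" by (auto simp: ineqs_def less_imp_le)
qed (use assms in simp)

lemma bounded_ray_exit:
  fixes z w :: "'a::euclidean_space"
  assumes "bounded S" "w \<noteq> 0"
  shows "\<exists>t\<ge>0. z + t *\<^sub>R w \<notin> S"
proof -
  obtain M where M: "\<And>x. x \<in> S \<Longrightarrow> norm x \<le> M" using assms(1) bounded_iff by blast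
  define t where "t = (\<bar>M\<bar> + norm z + 1) / norm w"
  have nw: "norm w > 0" using assms(2) by simp
  have t0: "t \<ge> 0" unfolding t_def using nw by simp
  have "\<bar>M\<bar> + norm z + 1 = norm (t *\<^sub>R w)" using t0 nw by (simp add: t_def)
  also have "\<dots> \<le> norm (z + t *\<^sub>R w) + norm z" using norm_triangle_ineq4[of "z + t *\<^sub>R w" z] by simp
  finally have "norm (z + t *\<^sub>R w) > M" by linarith
  then show ?thesis using t0 M by (meson not_le)
qed

lemma ineqs_move_orthogonal_to_tight:
  assumes fin: "finite Ls" and z: "z \<in> ineqs Ls g h"
    and orth: "\<And>l. l \<in> tight Ls g h z \<Longrightarrow> inner (g l) w = 0"
  shows "\<exists>e>0. \<forall>t. \<bar>t\<bar> \<le> e \<longrightarrow> z + t *\<^sub>R w \<in> ineqs Ls g h"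
proof -
  let ?N = "{l\<in>Ls. inner (g l) z \<noteq> h l}"
  let ?slack = "\<lambda>l. (h l - inner (g l) z) / (\<bar>inner (g l) w\<bar> + 1)"
  define e where "e = Min (insert 1 (?slack ` ?N))"
  have finN: "finite ?N" using fin by auto
  have slack_pos: "?slack l > 0" if "l \<in> ?N" for l
  proof -
    have "inner (g l) z < h l" using z that unfolding ineqs_def by force
    then show ?thesis by (simp add: add_pos_nonneg)
  qed
  have epos: "e > 0" unfolding e_def using finN slack_pos by (subst Min_gr_iff) auto
  have "z + t *\<^sub>R w \<in> ineqs Ls g h" if t: "\<bar>t\<bar> \<le> e" for t
    unfolding ineqs_def
  proof (intro CollectI ballI)
    fix l assume l: "l \<in> Ls"
    show "inner (g l) (z + t *\<^sub>R w) \<le> h l"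
    proof (cases "l \<in> ?N")
      case False
      then show ?thesis using orth[of l] l by (simp add: tight_def inner_add_right)
    next
      case True
      have "e \<le> ?slack l" unfolding e_def using finN True by (intro Min_le) auto
      then have "\<bar>t\<bar> \<le> ?slack l" using t by linarith
      then have "\<bar>t\<bar> * (\<bar>inner (g l) w\<bar> + 1) \<le> h l - inner (g l) z"
        by (simp add: pos_le_divide_eq add_nonneg_pos)
      moreover have "t * inner (g l) w \<le> \<bar>t\<bar> * \<bar>inner (g l) w\<bar>"
        by (metis abs_ge_self abs_mult)
      moreover have "\<bar>t\<bar> * \<bar>inner (g l) w\<bar> \<le> \<bar>t\<bar> * (\<bar>inner (g l) w\<bar> + 1)"
        by (simp add: mult_left_mono)
      ultimately show ?thesis by (simp add: inner_add_right)
    qed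
  qed
  then show ?thesis using epos by blast
qed

lemma ineqs_advance_to_new_tight:
  assumes fin: "finite Ls" and z: "z \<in> ineqs Ls g h"
    and orth: "\<And>l. l \<in> tight Ls g h z \<Longrightarrow> inner (g l) w = 0"
    and up: "\<exists>l\<in>Ls. inner (g l) w > 0"
  obtains z' l where "z' \<in> ineqs Ls g h" "tight Ls g h z \<subseteq> tight Ls g h z'"
    "l \<in> tight Ls g h z'" "inner (g l) w > 0"
proof -
  define T where "T = {l\<in>Ls. inner (g l) w > 0}"
  define r where "r = (\<lambda>l. (h l - inner (g l) z) / inner (g l) w)"
  have finT: "finite T" "T \<noteq> {}" using fin up by (auto simp: T_def)
  define t where "t = Min (r ` T)"
  have "t \<in> r ` T" using finT unfolding t_def by (intro Min_in) auto
  then obtain l where l: "l \<in> T" "r l = t" by auto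
  have tle: "t \<le> r l'" if "l' \<in> T" for l' using finT that unfolding t_def by simp
  have t0: "t \<ge> 0"
    using l z unfolding T_def r_def ineqs_def by (auto intro: divide_nonneg_pos)
  define z' where "z' = z + t *\<^sub>R w"
  have "inner (g l') z' \<le> h l'" if l': "l' \<in> Ls" for l'
  proof (cases "l' \<in> T")
    case True
    then have "inner (g l') w > 0" by (simp add: T_def)
    then have "t * inner (g l') w \<le> h l' - inner (g l') z"
      using tle[OF True] by (simp add: r_def pos_le_divide_eq)
    then show ?thesis by (simp add: z'_def inner_add_right)
  next
    case False
    then have "t * inner (g l') w \<le> 0" using l' t0 by (simp add: T_def mult_nonneg_nonpos)
    moreover have "inner (g l') z \<le> h l'" using z l' by (simp add: ineqs_def)
    ultimately show ?thesis by (simp add: z'_def inner_add_right)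
  qed
  then have "z' \<in> ineqs Ls g h" by (simp add: ineqs_def)
  moreover have "tight Ls g h z \<subseteq> tight Ls g h z'"
    using orth by (auto simp: tight_def z'_def inner_add_right)
  moreover have "l \<in> tight Ls g h z'" "inner (g l) w > 0"
    using l by (auto simp: tight_def T_def z'_def r_def inner_add_right)
  ultimately show ?thesis by (rule that)
qed

lemma ineqs_tight_span_grows:
  fixes g :: "'l \<Rightarrow> 'a::euclidean_space"
  assumes fin: "finite Ls" and bd: "bounded (ineqs Ls g h)" and z: "z \<in> ineqs Ls g h"
    and small: "dim (g ` tight Ls g h z) < DIM('a)"
  obtains z' where "z' \<in> ineqs Ls g h" "tight Ls g h z \<subseteq> tight Ls g h z'"
    "dim (g ` tight Ls g h z) < dim (g ` tight Ls g h z')"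
proof -
  let ?K = "tight Ls g h z"
  obtain w where w0: "w \<noteq> 0" and wo: "\<And>y. y \<in> span (g ` ?K) \<Longrightarrow> orthogonal w y"
    using orthogonal_to_subspace_exists small by blast
  have orth: "inner (g l) w = 0" if "l \<in> ?K" for l
    using wo[of "g l"] that by (simp add: span_base orthogonal_def inner_commute)
  have "\<exists>l\<in>Ls. inner (g l) u > 0" if "u = w \<or> u = - w" for u
  proof (rule ccontr)
    assume "\<not> ?thesis"
    then have "\<forall>l\<in>Ls. inner (g l) u \<le> 0" by (simp add: not_less)
    then have "z + t *\<^sub>R u \<in> ineqs Ls g h" if "t \<ge> 0" for t
    proof -
      have "inner (g l) (z + t *\<^sub>R u) \<le> h l" if "l \<in> Ls" for l
      proof -
        have "t * inner (g l) u \<le> 0"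
          using \<open>t \<ge> 0\<close> \<open>\<forall>l\<in>Ls. inner (g l) u \<le> 0\<close> that by (simp add: mult_nonneg_nonpos)
        moreover have "inner (g l) z \<le> h l" using z that by (simp add: ineqs_def)
        ultimately show ?thesis by (simp add: inner_add_right)
      qed
      then show ?thesis by (simp add: ineqs_def)
    qed
    moreover have "u \<noteq> 0" using w0 \<open>u = w \<or> u = - w\<close> by auto
    ultimately show False using bounded_ray_exit[OF bd] by blast
  qed
  then obtain z' l where z': "z' \<in> ineqs Ls g h" "?K \<subseteq> tight Ls g h z'"
    and l: "l \<in> tight Ls g h z'" "inner (g l) w > 0"
    using ineqs_advance_to_new_tight[OF fin z orth] by blast
  have "g l \<notin> span (g ` ?K)"
    using wo[of "g l"] l(2) by (auto simp: orthogonal_def inner_commute)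
  then have "dim (g ` ?K) < dim (insert (g l) (g ` ?K))" by (simp add: dim_insert)
  also have "\<dots> \<le> dim (g ` tight Ls g h z')" using z'(2) l(1) by (intro dim_subset) auto
  finally show ?thesis using z' that by blast
qed

text \<open>A point whose tight normals span the space is a vertex.\<close>
lemma ineqs_exists_spanning_tight:
  fixes g :: "'l \<Rightarrow> 'a::euclidean_space"
  assumes fin: "finite Ls" and bd: "bounded (ineqs Ls g h)"
  shows "z \<in> ineqs Ls g h \<Longrightarrow>
    \<exists>z'\<in>ineqs Ls g h. tight Ls g h z \<subseteq> tight Ls g h z' \<and> span (g ` tight Ls g h z') = UNIV"
proof (induction "DIM('a) - dim (g ` tight Ls g h z)" arbitrary: z rule: less_induct)
  case less
  show ?case
  proof (cases "dim (g ` tight Ls g h z) < DIM('a)")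
    case False
    then have "dim (g ` tight Ls g h z) = DIM('a)" using dim_subset_UNIV le_antisym not_le by blast
    then show ?thesis using less.prems dim_eq_full by blast
  next
    case True
    then obtain z' where z': "z' \<in> ineqs Ls g h" "tight Ls g h z \<subseteq> tight Ls g h z'"
      "dim (g ` tight Ls g h z) < dim (g ` tight Ls g h z')"
      using ineqs_tight_span_grows[OF fin bd less.prems] by blast
    moreover have "dim (g ` tight Ls g h z') \<le> DIM('a)" by (rule dim_subset_UNIV)
    ultimately have "DIM('a) - dim (g ` tight Ls g h z') < DIM('a) - dim (g ` tight Ls g h z)"
      by linarith
    from less.hyps[OF this z'(1)] z'(2) show ?thesis by blast
  qed
qed

lemma ineqs_many_tight_if_not_lin_indep:
  fixes g :: "'l \<Rightarrow> 'a::euclidean_space"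
  assumes fin: "finite Ls" and bd: "bounded (ineqs Ls g h)" and z: "z \<in> ineqs Ls g h"
    and nli: "\<not> lin_indep_family g (tight Ls g h z)"
  shows "\<exists>z'\<in>ineqs Ls g h. card (tight Ls g h z') > DIM('a)"
proof -
  obtain z' where z': "z' \<in> ineqs Ls g h" "tight Ls g h z \<subseteq> tight Ls g h z'"
    "span (g ` tight Ls g h z') = UNIV" using ineqs_exists_spanning_tight[OF fin bd z] by blast
  let ?K = "tight Ls g h z" and ?K' = "tight Ls g h z'"
  have finK: "finite ?K" "finite ?K'" using fin by (auto simp: tight_def)
  have "DIM('a) = dim (g ` ?K')" using z'(3) dim_eq_full by metis
  also have "g ` ?K' = g ` ?K \<union> g ` (?K' - ?K)" using z'(2) by blast
  also have "dim \<dots> \<le> dim (g ` ?K) + card (g ` (?K' - ?K))"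
    using finK by (intro dim_Un_le_dim_add_card) auto
  also have "card (g ` (?K' - ?K)) \<le> card (?K' - ?K)" using finK by (intro card_image_le) auto
  also have "dim (g ` ?K) < card ?K" using dim_less_card_if_not_lin_indep_family[OF finK(1) nli] .
  also have "card ?K + card (?K' - ?K) = card ?K'"
  proof -
    have "card ?K \<le> card ?K'" using finK z'(2) by (intro card_mono) auto
    moreover have "card (?K' - ?K) = card ?K' - card ?K"
      using finK z'(2) by (intro card_Diff_subset) auto
    ultimately show ?thesis by linarith
  qed
  finally show ?thesis using z'(1) by auto
qed

lemma aff_dim_equations:
  fixes g :: "'l \<Rightarrow> 'a::euclidean_space"
  assumes fin: "finite I" and li: "lin_indep_family g I" and x: "\<forall>l\<in>I. inner (g l) x = h l"
  shows "aff_dim {y. \<forall>l\<in>I. inner (g l) y = h l} = int (DIM('a) - card I)"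
proof -
  define N where "N = (span (g ` I))\<^sup>\<bottom>"
  have N: "w \<in> N \<longleftrightarrow> (\<forall>l\<in>I. inner (g l) w = 0)" for w
  proof
    assume "w \<in> N"
    then show "\<forall>l\<in>I. inner (g l) w = 0"
      by (auto simp: N_def orthogonal_comp_def orthogonal_def intro: span_base)
  next
    assume a: "\<forall>l\<in>I. inner (g l) w = 0"
    have "orthogonal w v" if "v \<in> span (g ` I)" for v
      by (rule orthogonal_to_span[OF that]) (use a in \<open>auto simp: orthogonal_def inner_commute\<close>)
    then show "w \<in> N" by (simp add: N_def orthogonal_comp_def orthogonal_commute)
  qed
  have "{y. \<forall>l\<in>I. inner (g l) y = h l} = (+) x ` N"
  proof (intro set_eqI iffI)
    fix y assume "y \<in> {y. \<forall>l\<in>I. inner (g l) y = h l}"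
    then have "y - x \<in> N" using x by (simp add: N inner_diff_right)
    then show "y \<in> (+) x ` N" by (rule image_eqI[rotated]) simp
  qed (use x in \<open>auto simp: N inner_add_right\<close>)
  then have "aff_dim {y. \<forall>l\<in>I. inner (g l) y = h l} = int (dim N)"
    by (simp add: aff_dim_translation_eq aff_dim_subspace N_def subspace_orthogonal_comp)
  moreover have "dim N + dim (span (g ` I)) = DIM('a)"
    using dim_subspace_orthogonal_to_vectors[of "span (g ` I)" UNIV]
    by (simp add: N_def orthogonal_comp_def subspace_span)
  moreover have "dim (span (g ` I)) = card I"
    using card_eq_dim_if_lin_indep_family[OF fin li] by simp
  ultimately show ?thesis by simp
qed

lemma facet_of_ineqs_in_hyperplane:
  fixes g :: "'l::finite \<Rightarrow> 'a::euclidean_space"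
  assumes F: "F facet_of (ineqs UNIV g h)"
  shows "\<exists>l. F \<subseteq> {x. inner (g l) x = h l}"
proof (rule ccontr)
  let ?P = "ineqs UNIV g h"
  assume "\<not> ?thesis"
  then have "\<forall>l. \<exists>u\<in>F. inner (g l) u \<noteq> h l" by blast
  then obtain u where u: "\<And>l. u l \<in> F" "\<And>l. inner (g l) (u l) \<noteq> h l" by metis
  have Ff: "F face_of ?P" "F \<noteq> ?P" using F unfolding facet_of_def by auto
  have ul: "inner (g l) (u l') \<le> h l" for l l'
    using face_of_imp_subset[OF Ff(1)] u(1)[of l'] by (auto simp: ineqs_def)
  define c where "c = real CARD('l)"
  have c0: "c > 0" by (simp add: c_def)
  text \<open>The barycentre of the witnesses lies in F but satisfies every inequality strictly.\<close>
  define p where "p = (\<Sum>l\<in>UNIV. (1 / c) *\<^sub>R u l)"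
  have "p \<in> F" unfolding p_def
    by (rule convex_sum) (use c0 u(1) face_of_imp_convex[OF Ff(1)] in \<open>auto simp: c_def\<close>)
  moreover have "inner (g l) p < h l" for l
  proof -
    have "inner (g l) p = (\<Sum>l'\<in>UNIV. inner (g l) (u l') / c)"
      by (simp add: p_def inner_sum_right)
    also have "\<dots> < (\<Sum>l'\<in>(UNIV::'l set). h l / c)"
    proof (rule sum_strict_mono_ex1)
      show "\<forall>x\<in>UNIV. inner (g l) (u x) / c \<le> h l / c" using ul c0 by (simp add: divide_right_mono)
      have "inner (g l) (u l) < h l" using ul[of l l] u(2)[of l] by simp
      then show "\<exists>a\<in>UNIV. inner (g l) (u a) / c < h l / c"
        using c0 by (intro bexI[of _ l]) (simp_all add: divide_strict_right_mono)
    qed simp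
    also have "\<dots> = h l" using c0 by (simp add: c_def)
    finally show ?thesis .
  qed
  then have "p \<in> interior ?P" by (intro interior_ineqs_if_strict) auto
  then have "p \<in> rel_interior ?P" using interior_subset_rel_interior by blast
  ultimately show False using face_of_disjoint_rel_interior[OF Ff] by blast
qed

lemma facet_of_ineqs_unique:
  fixes g :: "'l::finite \<Rightarrow> 'a::euclidean_space"
  assumes F1: "F1 facet_of (ineqs UNIV g h)" and F2: "F2 facet_of (ineqs UNIV g h)"
    and s1: "F1 \<subseteq> {x. inner (g l) x = h l}" and s2: "F2 \<subseteq> {x. inner (g l) x = h l}"
    and p: "p \<in> ineqs UNIV g h" "inner (g l) p \<noteq> h l"
  shows "F1 = F2"
proof -
  let ?P = "ineqs UNIV g h"
  let ?G = "?P \<inter> {x. inner (g l) x = h l}"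
  have G: "?G face_of ?P"
    by (rule face_of_Int_supporting_hyperplane_le[OF convex_ineqs]) (auto simp: ineqs_def)
  have GP: "?G \<noteq> ?P" using p by auto
  have "F = ?G" if F: "F facet_of ?P" and s: "F \<subseteq> {x. inner (g l) x = h l}" for F
  proof (rule ccontr)
    assume ne: "F \<noteq> ?G"
    have Ff: "F face_of ?P" using F facet_of_def by blast
    then have "F face_of ?G" using s face_of_imp_subset[OF Ff] face_of_subset[OF Ff] by blast
    then have "aff_dim F < aff_dim ?G"
      using face_of_aff_dim_lt[OF face_of_imp_convex[OF G]] ne by blast
    moreover have "aff_dim ?G < aff_dim ?P" using face_of_aff_dim_lt[OF convex_ineqs G GP] .
    moreover have "aff_dim F = aff_dim ?P - 1" using F facet_of_def by blast
    ultimately show False by linarith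
  qed
  then show ?thesis using F1 F2 s1 s2 by blast
qed

text \<open>A point strictly inside and a point violating only inequality l are joined by a segment
that crosses the boundary at a point where l alone is tight.\<close>
lemma ineqs_exists_tight_only:
  fixes g :: "'l::finite \<Rightarrow> 'a::euclidean_space"
  assumes p0: "\<forall>l. inner (g l) p0 < h l"
    and y: "\<forall>l'. l' \<noteq> l \<longrightarrow> inner (g l') y \<le> h l'" "inner (g l) y > h l"
  shows "\<exists>q\<in>ineqs UNIV g h. tight UNIV g h q = {l}"
proof -
  have d: "inner (g l) y - inner (g l) p0 > 0" using p0 y(2) by (smt (verit))
  define s where "s = (h l - inner (g l) p0) / (inner (g l) y - inner (g l) p0)"
  have s0: "s > 0" "s < 1" using p0[rule_format, of l] y(2) d
    by (simp_all add: s_def divide_less_eq)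
  define q where "q = p0 + s *\<^sub>R (y - p0)"
  have inner_q: "inner (g l') q = (1 - s) * inner (g l') p0 + s * inner (g l') y" for l'
    by (simp add: q_def inner_add_right inner_diff_right algebra_simps)
  have "s * (inner (g l) y - inner (g l) p0) = h l - inner (g l) p0"
    using d by (simp add: s_def)
  moreover have "inner (g l) q = inner (g l) p0 + s * (inner (g l) y - inner (g l) p0)"
    unfolding inner_q by (simp add: algebra_simps)
  ultimately have ql: "inner (g l) q = h l" by simp
  have qo: "inner (g l') q < h l'" if "l' \<noteq> l" for l'
  proof -
    have "(1 - s) * inner (g l') p0 < (1 - s) * h l'" using s0 p0 by simp
    moreover have "s * inner (g l') y \<le> s * h l'" using s0 y(1) that by (simp add: mult_left_mono)
    ultimately show ?thesis unfolding inner_q by (simp add: algebra_simps)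
  qed
  have "inner (g l') q \<le> h l'" for l' using ql qo[of l'] by (cases "l' = l") auto
  then have "q \<in> ineqs UNIV g h" by (simp add: ineqs_def)
  moreover have "tight UNIV g h q = {l}" using ql qo by (force simp: tight_def)
  ultimately show ?thesis by blast
qed

lemma facet_of_ineqs_if_tight_only:
  fixes g :: "'l::finite \<Rightarrow> 'a::euclidean_space"
  assumes p0: "\<forall>l. inner (g l) p0 < h l"
    and q: "q \<in> ineqs UNIV g h" "tight UNIV g h q = {l}"
  shows "(ineqs UNIV g h \<inter> {x. inner (g l) x = h l}) facet_of (ineqs UNIV g h)"
proof -
  let ?P = "ineqs UNIV g h"
  let ?H = "{x. inner (g l) x = h l}"
  let ?U = "{x. \<forall>l'\<in>- {l}. inner (g l') x < h l'}"
  have G: "(?P \<inter> ?H) face_of ?P"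
    by (rule face_of_Int_supporting_hyperplane_le[OF convex_ineqs]) (auto simp: ineqs_def)
  have p0P: "p0 \<in> ?P" using p0 by (auto simp: ineqs_def less_imp_le)
  have "p0 \<notin> ?P \<inter> ?H" using p0 by (simp add: less_imp_neq)
  then have GP: "?P \<inter> ?H \<noteq> ?P" using p0P by blast
  have affP: "aff_dim ?P = int DIM('a)"
    using aff_dim_nonempty_interior interior_ineqs_if_strict[of UNIV g p0 h] p0 by blast
  have ql: "q \<in> ?H" and qU: "q \<in> ?U" using q by (auto simp: tight_def ineqs_def less_le)
  have gl: "g l \<noteq> 0" using p0[rule_format, of l] ql by auto
  text \<open>Near q the face is the whole hyperplane, so it has codimension one.\<close>
  have "aff_dim ?H = aff_dim (?H \<inter> ?U)"
    using ql qU by (intro aff_dim_convex_Int_open[symmetric] open_strict_ineqs convex_hyperplane) auto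
  also have "\<dots> \<le> aff_dim (?P \<inter> ?H)"
    by (intro aff_dim_subset) (auto simp: ineqs_def intro: less_imp_le)
  finally have "int (DIM('a) - 1) \<le> aff_dim (?P \<inter> ?H)" using aff_dim_hyperplane[OF gl] by simp
  moreover have "aff_dim (?P \<inter> ?H) < aff_dim ?P" using face_of_aff_dim_lt[OF convex_ineqs G GP] .
  moreover have "DIM('a) \<ge> 1" by (simp add: DIM_positive Suc_leI)
  ultimately have "aff_dim (?P \<inter> ?H) = aff_dim ?P - 1" using affP by linarith
  then show ?thesis using G ql q(1) by (auto simp: facet_of_def)
qed

lemma ineqs_redundant_normal_orthogonal:
  fixes g :: "'l::finite \<Rightarrow> 'a::euclidean_space"
  assumes red: "ineqs (- {l}) g h = ineqs UNIV g h"
    and x: "x \<in> ineqs UNIV g h" "l \<in> tight UNIV g h x"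
    and orth: "\<And>l'. l' \<in> tight UNIV g h x - {l} \<Longrightarrow> inner (g l') w = 0"
  shows "inner (g l) w = 0"
proof -
  have "x \<in> ineqs (- {l}) g h" using x(1) by (simp add: ineqs_def)
  moreover have "tight (- {l}) g h x = tight UNIV g h x - {l}" by (auto simp: tight_def)
  ultimately obtain e where e: "e > 0" "\<And>t. \<bar>t\<bar> \<le> e \<Longrightarrow> x + t *\<^sub>R w \<in> ineqs (- {l}) g h"
    using ineqs_move_orthogonal_to_tight[of "- {l}" x g h w] orth by force
  have "inner (g l) (x + t *\<^sub>R w) \<le> h l" if "\<bar>t\<bar> \<le> e" for t
    using e(2)[OF that] red by (auto simp: ineqs_def)
  moreover have "inner (g l) x = h l" using x(2) by (simp add: tight_def)
  ultimately have step: "t * inner (g l) w \<le> 0" if "\<bar>t\<bar> \<le> e" for t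
    using that by (force simp: inner_add_right)
  have "e * inner (g l) w \<le> 0" "(- e) * inner (g l) w \<le> 0"
    using step[of e] step[of "- e"] e(1) by simp_all
  then show ?thesis using e(1) by (simp add: mult_le_0_iff zero_le_mult_iff)
qed

text \<open>A redundant inequality that is tight somewhere is tight at a vertex together with
enough other inequalities to span the space on their own.\<close>
lemma ineqs_redundant_tight_imp_many_tight:
  fixes g :: "'l::finite \<Rightarrow> 'a::euclidean_space"
  assumes bd: "bounded (ineqs UNIV g h)"
    and red: "ineqs (- {l}) g h = ineqs UNIV g h"
    and x: "x \<in> ineqs UNIV g h" "l \<in> tight UNIV g h x"
  shows "\<exists>x'\<in>ineqs UNIV g h. card (tight UNIV g h x') > DIM('a)"
proof -
  obtain x' where x': "x' \<in> ineqs UNIV g h" "tight UNIV g h x \<subseteq> tight UNIV g h x'"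
    "span (g ` tight UNIV g h x') = UNIV" using ineqs_exists_spanning_tight[OF _ bd x(1)] by auto
  let ?K = "tight UNIV g h x' - {l}"
  have lK: "l \<in> tight UNIV g h x'" using x(2) x'(2) by blast
  have "dim (g ` ?K) = DIM('a)"
  proof (rule ccontr)
    assume "dim (g ` ?K) \<noteq> DIM('a)"
    then obtain w where w0: "w \<noteq> 0" and wo: "\<And>y. y \<in> span (g ` ?K) \<Longrightarrow> orthogonal w y"
      using orthogonal_to_subspace_exists dim_subset_UNIV le_neq_implies_less by blast
    have wK: "inner (g l') w = 0" if "l' \<in> ?K" for l'
      using wo[of "g l'"] that by (simp add: span_base orthogonal_def inner_commute)
    then have "inner (g l) w = 0"
      using ineqs_redundant_normal_orthogonal[OF red x'(1) lK] by blast
    then have "inner (g l') w = 0" if "l' \<in> tight UNIV g h x'" for l'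
      using wK that by (cases "l' = l") auto
    then have "orthogonal w v" if "v \<in> g ` tight UNIV g h x'" for v
      using that by (auto simp: orthogonal_def inner_commute)
    then have "orthogonal v w" if "v \<in> span (g ` tight UNIV g h x')" for v
      using orthogonal_to_span[OF that, of w] by (simp add: orthogonal_commute)
    then have "orthogonal w w" using x'(3) by auto
    then show False using w0 by (simp add: orthogonal_def)
  qed
  moreover have "dim (g ` ?K) \<le> card ?K"
    by (rule order_trans[OF dim_le_card' card_image_le]) auto
  moreover have "card (tight UNIV g h x') = Suc (card ?K)"
    using lK by (intro card_Suc_Diff1[symmetric]) auto
  ultimately show ?thesis using x'(1) by (intro bexI[of _ x']) linarith+
qed

lemma aff_dim_ineqs_if_strict:
  fixes g :: "'l::finite \<Rightarrow> 'a::euclidean_space"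
  assumes "\<forall>l. inner (g l) p0 < h l"
  shows "aff_dim (ineqs UNIV g h) = int DIM('a)"
  using aff_dim_nonempty_interior interior_ineqs_if_strict[of UNIV g p0 h] assms by blast

lemma card_facets_le_card_tight:
  fixes g :: "'l::finite \<Rightarrow> 'a::euclidean_space"
  assumes p0: "\<forall>l. inner (g l) p0 < h l" and x: "x \<in> ineqs UNIV g h"
  shows "card {F. F facet_of ineqs UNIV g h \<and> x \<in> F} \<le> card (tight UNIV g h x)"
proof -
  let ?P = "ineqs UNIV g h"
  define \<phi> where "\<phi> = (\<lambda>F. SOME l. F \<subseteq> {y. inner (g l) y = h l})"
  have \<phi>: "F \<subseteq> {y. inner (g (\<phi> F)) y = h (\<phi> F)}" if "F facet_of ?P" for F
    using facet_of_ineqs_in_hyperplane[OF that] unfolding \<phi>_def by (rule someI_ex)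
  have p0P: "p0 \<in> ?P" using p0 by (auto simp: ineqs_def less_imp_le)
  show ?thesis
  proof (rule card_inj_on_le)
    show "inj_on \<phi> {F. F facet_of ?P \<and> x \<in> F}"
    proof (rule inj_onI)
      fix F1 F2 assume F: "F1 \<in> {F. F facet_of ?P \<and> x \<in> F}" "F2 \<in> {F. F facet_of ?P \<and> x \<in> F}"
        and e: "\<phi> F1 = \<phi> F2"
      have "inner (g (\<phi> F1)) p0 \<noteq> h (\<phi> F1)" using p0 by (metis less_irrefl)
      then show "F1 = F2"
        using facet_of_ineqs_unique[OF _ _ \<phi> _ p0P] F \<phi>[of F2] e by auto
    qed
    show "\<phi> ` {F. F facet_of ?P \<and> x \<in> F} \<subseteq> tight UNIV g h x"
      using \<phi> by (auto simp: tight_def)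
  qed simp
qed

lemma card_tight_le_card_facets:
  fixes g :: "'l::finite \<Rightarrow> 'a::euclidean_space"
  assumes p0: "\<forall>l. inner (g l) p0 < h l" and poly: "polytope (ineqs UNIV g h)"
    and x: "x \<in> ineqs UNIV g h"
    and nonred: "\<And>l. l \<in> tight UNIV g h x \<Longrightarrow> ineqs (- {l}) g h \<noteq> ineqs UNIV g h"
  shows "card (tight UNIV g h x) \<le> card {F. F facet_of ineqs UNIV g h \<and> x \<in> F}"
proof -
  let ?P = "ineqs UNIV g h"
  define F where "F = (\<lambda>l. ?P \<inter> {y. inner (g l) y = h l})"
  have "\<exists>q\<in>?P. tight UNIV g h q = {l}" if l: "l \<in> tight UNIV g h x" for l
  proof -
    obtain y where y: "y \<in> ineqs (- {l}) g h" "y \<notin> ?P"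
      using nonred[OF l] by (auto simp: ineqs_def)
    have "\<forall>l'. l' \<noteq> l \<longrightarrow> inner (g l') y \<le> h l'" using y(1) by (simp add: ineqs_def)
    moreover obtain l' where "inner (g l') y > h l'" using y(2) by (auto simp: ineqs_def not_le)
    ultimately have "\<forall>l'. l' \<noteq> l \<longrightarrow> inner (g l') y \<le> h l'" "inner (g l) y > h l"
      by (metis not_le)+
    then show ?thesis by (rule ineqs_exists_tight_only[OF p0])
  qed
  then obtain q where q: "\<And>l. l \<in> tight UNIV g h x \<Longrightarrow> q l \<in> ?P \<and> tight UNIV g h (q l) = {l}"
    by metis
  show ?thesis
  proof (rule card_inj_on_le)
    show "inj_on F (tight UNIV g h x)"
    proof (rule inj_onI)
      fix l1 l2 assume l: "l1 \<in> tight UNIV g h x" "l2 \<in> tight UNIV g h x" and e: "F l1 = F l2"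
      have "q l1 \<in> F l2" using q[OF l(1)] e by (auto simp: F_def tight_def)
      then show "l1 = l2" using q[OF l(1)] by (auto simp: F_def tight_def)
    qed
    show "F ` tight UNIV g h x \<subseteq> {F. F facet_of ?P \<and> x \<in> F}"
      using facet_of_ineqs_if_tight_only[OF p0] q x by (auto simp: F_def tight_def)
    show "finite {F. F facet_of ?P \<and> x \<in> F}"
      by (rule finite_subset[OF _ finite_polytope_faces[OF poly]]) (auto simp: facet_of_def)
  qed
qed

section \<open>The polytope of one player\<close>

definition P_normal :: "real^'n^'m \<Rightarrow> 'm + 'n \<Rightarrow> real^'m" where
  "P_normal B l = (case l of Inl i \<Rightarrow> - axis i 1 | Inr j \<Rightarrow> column j B)"

definition P_rhs :: "'m + 'n \<Rightarrow> real" where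
  "P_rhs l = (case l of Inl i \<Rightarrow> 0 | Inr j \<Rightarrow> 1)"

text \<open>Nondegeneracy of (A, B) is this condition for B together with the same
condition for the transpose of A.\<close>
definition P_nondeg :: "real^'n^'m \<Rightarrow> bool" where
  "P_nondeg B \<longleftrightarrow> (\<forall>x\<in>mixed. card (bestresp2 B x) \<le> card (supp x))"

definition P_labels_bounded :: "real^'n^'m \<Rightarrow> bool" where
  "P_labels_bounded B \<longleftrightarrow> (\<forall>x\<in>Ppoly B. card (labelsP B x) \<le> CARD('m))"

lemma inner_column: "inner (column j B) x = (transpose B *v x) $ j"
  by (simp add: inner_vec_def column_def transpose_def matrix_vector_mult_def mult.commute)

lemma inner_P_normal:
  "inner (P_normal B l) x = (case l of Inl i \<Rightarrow> - (x $ i) | Inr j \<Rightarrow> (transpose B *v x) $ j)"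
  by (cases l) (simp_all add: P_normal_def inner_column inner_axis')

lemma Pineq_iff_inner: "Pineq B l x \<longleftrightarrow> inner (P_normal B l) x \<le> P_rhs l"
  by (cases l) (auto simp: Pineq_def inner_P_normal P_rhs_def)

lemma Pbind_iff_inner: "Pbind B l x \<longleftrightarrow> inner (P_normal B l) x = P_rhs l"
  by (cases l) (auto simp: Pbind_def inner_P_normal P_rhs_def)

lemma Ppoly_eq_ineqs: "Ppoly B = ineqs UNIV (P_normal B) P_rhs"
  by (auto simp: Ppoly_def ineqs_def Pineq_iff_inner)

lemma labelsP_eq_tight: "labelsP B x = tight UNIV (P_normal B) P_rhs x"
  by (auto simp: labelsP_def tight_def Pbind_iff_inner)

lemma Collect_sum_eq: "{k. P k} = Inl ` {i. P (Inl i)} \<union> Inr ` {j. P (Inr j)}"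
  by (auto simp: image_iff intro: sum.exhaust)

lemma labelsP_eq: "labelsP B x = Inl ` {i. x $ i = 0} \<union> Inr ` {j. (transpose B *v x) $ j = 1}"
  unfolding labelsP_def by (subst Collect_sum_eq) (simp add: Pbind_def)

lemma card_Inl_Un_Inr:
  "card (Inl ` (X::'a::finite set) \<union> Inr ` (Y::'b::finite set)) = card X + card Y"
  by (simp add: Plus_def[symmetric] card_Plus)

lemma card_labelsP:
  "card (labelsP B x) = card {i. x $ i = 0} + card {j. (transpose B *v x) $ j = 1}"
  unfolding labelsP_eq by (rule card_Inl_Un_Inr)

lemma mem_Ppoly_iff: "x \<in> Ppoly B \<longleftrightarrow> (\<forall>i. 0 \<le> x $ i) \<and> (\<forall>j. (transpose B *v x) $ j \<le> 1)"
  unfolding Ppoly_def mem_Collect_eq split_sum_all[of "\<lambda>l. Pineq B l x"] by (simp add: Pineq_def)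

lemma card_zeros_add_card_supp:
  fixes x :: "real^'m"
  assumes "\<forall>i. 0 \<le> x $ i"
  shows "card {i. x $ i = 0} + card (supp x) = CARD('m)"
proof -
  have "{i. x $ i = 0} \<union> supp x = UNIV"
    using assms by (auto simp: supp_def less_le)
  moreover have "{i. x $ i = 0} \<inter> supp x = {}" by (auto simp: supp_def)
  ultimately show ?thesis by (metis card_Un_disjoint finite)
qed

lemma mixed_nonneg: "x \<in> mixed \<Longrightarrow> 0 \<le> x $ i"
  by (simp add: mixed_def)

lemma mixed_nonzero: "x \<in> mixed \<Longrightarrow> x \<noteq> 0"
  by (auto simp: mixed_def)

lemma axis_mixed: "axis j 1 \<in> mixed"
  by (simp add: mixed_def axis_def sum.delta)

lemma card_labelsX_mixed:
  fixes B :: "real^'n^'m" and x :: "real^'m"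
  assumes "x \<in> mixed"
  shows "card (labelsX B x) = CARD('m) - card (supp x) + card (bestresp2 B x)"
proof -
  have "card (labelsX B x) = card {i. x $ i = 0} + card (bestresp2 B x)"
    unfolding labelsX_def by (rule card_Inl_Un_Inr)
  then show ?thesis
    using card_zeros_add_card_supp[of x] mixed_nonneg[OF assms] by simp
qed

lemma sum_pos_if_nonneg_nonzero:
  fixes x :: "real^'m"
  assumes "\<forall>i. 0 \<le> x $ i" "x \<noteq> 0"
  shows "(\<Sum>i\<in>UNIV. x $ i) > 0"
proof -
  obtain i where "x $ i \<noteq> 0" using assms(2) by (metis vec_eq_iff zero_index)
  then have "x $ i > 0" using assms(1) by (simp add: less_le)
  moreover have "x $ i \<le> (\<Sum>i\<in>UNIV. x $ i)" using assms(1) by (intro member_le_sum) auto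
  ultimately show ?thesis by linarith
qed

lemma normalized_mixed:
  fixes x :: "real^'m"
  assumes "\<forall>i. 0 \<le> x $ i" "x \<noteq> 0"
  shows "(1 / (\<Sum>i\<in>UNIV. x $ i)) *\<^sub>R x \<in> mixed"
    "supp ((1 / (\<Sum>i\<in>UNIV. x $ i)) *\<^sub>R x) = supp x"
proof -
  have s: "(\<Sum>i\<in>UNIV. x $ i) > 0" by (rule sum_pos_if_nonneg_nonzero[OF assms])
  show "(1 / (\<Sum>i\<in>UNIV. x $ i)) *\<^sub>R x \<in> mixed"
    using s assms(1) by (simp add: mixed_def sum_divide_distrib[symmetric])
  show "supp ((1 / (\<Sum>i\<in>UNIV. x $ i)) *\<^sub>R x) = supp x"
    using s by (auto simp: supp_def zero_less_mult_iff zero_less_divide_iff)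
qed

lemma Max_range_eqI:
  fixes f :: "'a::finite \<Rightarrow> real"
  assumes "\<And>k. f k \<le> M" "f k0 = M"
  shows "Max (range f) = M"
  using assms by (intro Max_eqI) auto

lemma Max_range_ge: "f k \<le> Max (range (f::'a::finite \<Rightarrow> real))"
  by (intro Max_ge) auto

lemma Max_range_attained: "\<exists>k. f k = Max (range (f::'a::finite \<Rightarrow> real))"
  using Max_in[of "range f"] by (metis finite finite_imageI rangeE UNIV_not_empty image_is_empty)

text \<open>Boundedness of P forbids a nonnegative nonzero x with nonpositive payoffs, since
then the whole ray through x would lie in P.\<close>
lemma exists_pos_payoff_if_polytope:
  fixes B :: "real^'n^'m"
  assumes poly: "polytope (Ppoly B)" and x0: "\<forall>i. 0 \<le> x $ i" and xn: "x \<noteq> 0"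
  shows "\<exists>j. (transpose B *v x) $ j > 0"
proof (rule ccontr)
  assume "\<not> ?thesis"
  then have "t *\<^sub>R x \<in> Ppoly B" if "t \<ge> 0" for t
    using x0 that by (auto simp: mem_Ppoly_iff matrix_vector_mult_scaleR not_less
        intro: order_trans[OF mult_nonneg_nonpos])
  then show False using bounded_ray_exit[OF polytope_imp_bounded[OF poly] xn, of 0] by auto
qed

definition max_payoff2 :: "real^'n^'m \<Rightarrow> real^'m \<Rightarrow> real" where
  "max_payoff2 B x = Max (range (\<lambda>k. (transpose B *v x) $ k))"

lemma bestresp2_eq: "bestresp2 B x = {j. (transpose B *v x) $ j = max_payoff2 B x}"
  by (simp add: bestresp2_def max_payoff2_def)

lemma payoff_le_max_payoff2: "(transpose B *v x) $ j \<le> max_payoff2 B x"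
  unfolding max_payoff2_def by (rule Max_range_ge)

lemma max_payoff2_pos:
  assumes "polytope (Ppoly B)" "x \<in> mixed"
  shows "max_payoff2 B x > 0"
  using exists_pos_payoff_if_polytope[OF assms(1) _ mixed_nonzero[OF assms(2)]]
    mixed_nonneg[OF assms(2)] payoff_le_max_payoff2[of B x] by (meson less_le_trans)

definition to_Ppoly :: "real^'n^'m \<Rightarrow> real^'m \<Rightarrow> real^'m" where
  "to_Ppoly B x = (1 / max_payoff2 B x) *\<^sub>R x"

lemma to_Ppoly_mem:
  assumes "polytope (Ppoly B)" "x \<in> mixed"
  shows "to_Ppoly B x \<in> Ppoly B"
  using max_payoff2_pos[OF assms] mixed_nonneg[OF assms(2)] payoff_le_max_payoff2[of B x]
  by (simp add: mem_Ppoly_iff to_Ppoly_def matrix_vector_mult_scaleR)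

lemma labelsP_to_Ppoly:
  assumes "polytope (Ppoly B)" "x \<in> mixed"
  shows "labelsP B (to_Ppoly B x) = labelsX B x"
proof -
  have M0: "max_payoff2 B x > 0" by (rule max_payoff2_pos[OF assms])
  then have "{i. to_Ppoly B x $ i = 0} = {i. x $ i = 0}"
    "{j. (transpose B *v to_Ppoly B x) $ j = 1} = bestresp2 B x"
    by (auto simp: to_Ppoly_def bestresp2_eq matrix_vector_mult_scaleR)
  then show ?thesis by (simp add: labelsP_eq labelsX_def)
qed

lemma P_nondeg_card_max_payoffs:
  fixes B :: "real^'n^'m"
  assumes nd: "P_nondeg B" and x0: "\<forall>i. 0 \<le> x $ i"
    and leM: "\<And>j. (transpose B *v x) $ j \<le> M" and M0: "M > 0"
  shows "card {j. (transpose B *v x) $ j = M} \<le> card (supp x)"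
proof (cases "\<exists>j0. (transpose B *v x) $ j0 = M")
  case True
  then obtain j0 where j0: "(transpose B *v x) $ j0 = M" by blast
  have xn: "x \<noteq> 0" using j0 M0 by auto
  define s where "s = (\<Sum>i\<in>UNIV. x $ i)"
  have s0: "s > 0" unfolding s_def by (rule sum_pos_if_nonneg_nonzero[OF x0 xn])
  define xh where "xh = (1 / s) *\<^sub>R x"
  have xh: "xh \<in> mixed" "supp xh = supp x"
    using normalized_mixed[OF x0 xn] by (simp_all add: xh_def s_def)
  have bx: "(transpose B *v xh) $ j = (transpose B *v x) $ j / s" for j
    by (simp add: xh_def matrix_vector_mult_scaleR)
  have "max_payoff2 B xh = M / s"
    unfolding max_payoff2_def
    by (rule Max_range_eqI[of _ _ j0]) (use leM s0 j0 in \<open>simp_all add: bx divide_right_mono\<close>)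
  then have "bestresp2 B xh = {j. (transpose B *v x) $ j = M}"
    using s0 by (auto simp: bestresp2_eq bx)
  then show ?thesis using nd xh unfolding P_nondeg_def by metis
qed simp

lemma P_labels_bounded_iff_P_nondeg:
  fixes B :: "real^'n^'m"
  assumes poly: "polytope (Ppoly B)"
  shows "P_labels_bounded B \<longleftrightarrow> P_nondeg B"
proof
  assume b: "P_labels_bounded B"
  show "P_nondeg B" unfolding P_nondeg_def
  proof
    fix x :: "real^'m" assume x: "x \<in> mixed"
    have "card (labelsX B x) \<le> CARD('m)"
      using b to_Ppoly_mem[OF poly x] labelsP_to_Ppoly[OF poly x] unfolding P_labels_bounded_def by metis
    moreover have "card (supp x) \<le> CARD('m)" by (rule card_mono) auto
    ultimately show "card (bestresp2 B x) \<le> card (supp x)"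
      using card_labelsX_mixed[OF x, of B] by linarith
  qed
next
  assume nd: "P_nondeg B"
  show "P_labels_bounded B" unfolding P_labels_bounded_def
  proof
    fix x assume "x \<in> Ppoly B"
    then have x0: "\<forall>i. 0 \<le> x $ i" and x1: "\<And>j. (transpose B *v x) $ j \<le> 1"
      by (auto simp: mem_Ppoly_iff)
    have "card {j. (transpose B *v x) $ j = 1} \<le> card (supp x)"
      by (rule P_nondeg_card_max_payoffs[OF nd x0 x1]) simp
    then show "card (labelsP B x) \<le> CARD('m)"
      using card_zeros_add_card_supp[OF x0] unfolding card_labelsP by linarith
  qed
qed

lemma P_nondeg_imp_lin_indep_labels:
  fixes B :: "real^'n^'m"
  assumes poly: "polytope (Ppoly B)" and nd: "P_nondeg B" and x: "x \<in> Ppoly B"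
  shows "lin_indep_family (P_normal B) (labelsP B x)"
proof (rule ccontr)
  assume "\<not> ?thesis"
  then obtain x' where "x' \<in> Ppoly B" "card (labelsP B x') > DIM(real^'m)"
    using ineqs_many_tight_if_not_lin_indep[of UNIV "P_normal B" P_rhs x] x
      polytope_imp_bounded[OF poly] by (auto simp: Ppoly_eq_ineqs labelsP_eq_tight)
  then show False
    using P_labels_bounded_iff_P_nondeg[OF poly] nd unfolding P_labels_bounded_def by fastforce
qed

text \<open>A dependence among the support rows of the best-response columns yields one among
the labels: the coefficients of the unit vectors are the residuals on the non-support rows.\<close>
lemma not_lin_indep_labels_if_columns_dependent:
  fixes B :: "real^'n^'m" and Z :: "'m set" and J :: "'n set"
  assumes c: "(\<Sum>j\<in>J. c j *\<^sub>R (\<chi> i. if i \<notin> Z then B $ i $ j else 0)) = 0"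
    and j0: "j0 \<in> J" "c j0 \<noteq> 0"
  shows "\<not> lin_indep_family (P_normal B) (Inl ` Z \<union> Inr ` J)"
proof
  assume li: "lin_indep_family (P_normal B) (Inl ` Z \<union> Inr ` J)"
  define d where "d = (\<lambda>l. case l of Inl i \<Rightarrow> (\<Sum>j\<in>J. c j * B $ i $ j) | Inr j \<Rightarrow> c j)"
  have ck: "(\<Sum>j\<in>J. c j * B $ k $ j) = 0" if "k \<notin> Z" for k
    using arg_cong[OF c, of "\<lambda>v. v $ k"] that by simp
  have "(\<Sum>l\<in>Inl ` Z \<union> Inr ` J. d l *\<^sub>R P_normal B l)
      = (\<Sum>i\<in>Z. d (Inl i) *\<^sub>R P_normal B (Inl i)) + (\<Sum>j\<in>J. d (Inr j) *\<^sub>R P_normal B (Inr j))"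
    by (simp add: Plus_def[symmetric] sum.Plus comp_def)
  also have "\<dots> = 0"
  proof (subst vec_eq_iff, intro allI)
    fix k
    have "(\<Sum>i\<in>Z. d (Inl i) *\<^sub>R P_normal B (Inl i)) $ k = (if k \<in> Z then - (\<Sum>j\<in>J. c j * B $ k $ j) else 0)"
      by (simp add: P_normal_def d_def axis_def if_distrib sum.delta cong: if_cong)
    moreover have "(\<Sum>j\<in>J. d (Inr j) *\<^sub>R P_normal B (Inr j)) $ k = (\<Sum>j\<in>J. c j * B $ k $ j)"
      by (simp add: P_normal_def d_def column_def)
    ultimately show "((\<Sum>i\<in>Z. d (Inl i) *\<^sub>R P_normal B (Inl i)) + (\<Sum>j\<in>J. d (Inr j) *\<^sub>R P_normal B (Inr j))) $ k = 0 $ k"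
      using ck[of k] by simp
  qed
  finally have "d (Inr j0) = 0" using li j0 unfolding lin_indep_family_def by blast
  then show False using j0 by (simp add: d_def)
qed

lemma in_span_axis_if_zero_outside:
  fixes v :: "real^'m"
  assumes "\<And>i. i \<notin> S \<Longrightarrow> v $ i = 0"
  shows "v \<in> span ((\<lambda>i. axis i 1) ` S)"
proof -
  have "v = (\<Sum>i\<in>S. v $ i *\<^sub>R axis i 1)"
    using assms by (simp add: vec_eq_iff axis_def if_distrib sum.delta cong: if_cong)
  also have "\<dots> \<in> span ((\<lambda>i. axis i 1) ` S)"
    by (intro span_sum span_mul span_base) auto
  finally show ?thesis .
qed

lemma P_nondeg_iff_lin_indep_support_columns:
  fixes B :: "real^'n^'m"
  assumes poly: "polytope (Ppoly B)"
  shows "P_nondeg B \<longleftrightarrow> (\<forall>x\<in>mixed.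
    lin_indep_family (\<lambda>j. \<chi> i. if i \<in> supp x then B $ i $ j else 0) (bestresp2 B x))"
proof (intro iffI ballI)
  fix x :: "real^'m" assume nd: "P_nondeg B" and x: "x \<in> mixed"
  show "lin_indep_family (\<lambda>j. \<chi> i. if i \<in> supp x then B $ i $ j else 0) (bestresp2 B x)"
  proof (rule ccontr)
    assume "\<not> ?thesis"
    then obtain c j0 where c: "(\<Sum>j\<in>bestresp2 B x. c j *\<^sub>R (\<chi> i. if i \<in> supp x then B $ i $ j else 0)) = 0"
      and j0: "j0 \<in> bestresp2 B x" "c j0 \<noteq> 0"
      unfolding lin_indep_family_def by blast
    have "i \<in> supp x \<longleftrightarrow> i \<notin> {i. x $ i = 0}" for i
      using mixed_nonneg[OF x, of i] by (auto simp: supp_def)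
    then have "\<not> lin_indep_family (P_normal B) (labelsX B x)"
      unfolding labelsX_def
      using not_lin_indep_labels_if_columns_dependent[where B=B and Z="{i. x $ i = 0}" and c=c, OF _ j0] c
      by simp
    then show False
      using P_nondeg_imp_lin_indep_labels[OF poly nd to_Ppoly_mem[OF poly x]]
        labelsP_to_Ppoly[OF poly x] by simp
  qed
next
  assume li: "\<forall>x\<in>mixed. lin_indep_family (\<lambda>j. \<chi> i. if i \<in> supp x then B $ i $ j else 0) (bestresp2 B x)"
  show "P_nondeg B" unfolding P_nondeg_def
  proof
    fix x :: "real^'m" assume x: "x \<in> mixed"
    let ?v = "\<lambda>j. (\<chi> i. if i \<in> supp x then B $ i $ j else 0) :: real^'m"
    have "card (bestresp2 B x) = dim (?v ` bestresp2 B x)"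
      using li x by (intro card_eq_dim_if_lin_indep_family) auto
    also have "\<dots> \<le> card ((\<lambda>i. axis i (1::real)) ` supp x)"
      by (rule dim_le_card) (auto intro!: in_span_axis_if_zero_outside)
    also have "\<dots> \<le> card (supp x)" by (rule card_image_le) simp
    finally show "card (bestresp2 B x) \<le> card (supp x)" .
  qed
qed

lemma PI_eq: "PI B I = Ppoly B \<inter> {y. \<forall>l\<in>I. inner (P_normal B l) y = P_rhs l}"
  by (auto simp: PI_def labelsP_def Pbind_iff_inner)

text \<open>Near x the polytope coincides with the affine space cut out by the tight inequalities,
whose dimension is known once the tight normals are independent.\<close>
lemma aff_dim_PI_labelsP:
  fixes B :: "real^'n^'m"
  assumes poly: "polytope (Ppoly B)" and nd: "P_nondeg B" and x: "x \<in> Ppoly B"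
  shows "aff_dim (PI B (labelsP B x)) = int (CARD('m) - card (labelsP B x))"
proof -
  let ?I = "labelsP B x"
  let ?H = "{y. \<forall>l\<in>?I. inner (P_normal B l) y = P_rhs l}"
  let ?U = "{y. \<forall>l\<in>- ?I. inner (P_normal B l) y < P_rhs l}"
  have xH: "x \<in> ?H" by (simp add: labelsP_def Pbind_iff_inner)
  have xU: "x \<in> ?U"
    using x by (auto simp: Ppoly_eq_ineqs ineqs_def labelsP_eq_tight tight_def less_le)
  have "affine ?H"
  proof -
    have "?H = (\<Inter>l\<in>?I. {y. inner (P_normal B l) y = P_rhs l})" by auto
    then show ?thesis by (auto intro!: affine_Inter simp: affine_hyperplane)
  qed
  have "aff_dim ?H = aff_dim (?H \<inter> ?U)"
    using xH xU \<open>affine ?H\<close>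
    by (intro aff_dim_convex_Int_open[symmetric] open_strict_ineqs affine_imp_convex) auto
  also have "\<dots> \<le> aff_dim (PI B ?I)"
  proof (rule aff_dim_subset, rule subsetI)
    fix y assume y: "y \<in> ?H \<inter> ?U"
    have "inner (P_normal B l) y \<le> P_rhs l" for l
      using y by (cases "l \<in> ?I") (auto intro: less_imp_le)
    then show "y \<in> PI B ?I" using y by (simp add: PI_eq Ppoly_eq_ineqs ineqs_def)
  qed
  also have "\<dots> \<le> aff_dim ?H" by (intro aff_dim_subset) (auto simp: PI_eq)
  finally have "aff_dim (PI B ?I) = aff_dim ?H" by simp
  also have "\<dots> = int (DIM(real^'m) - card ?I)"
    using xH by (intro aff_dim_equations P_nondeg_imp_lin_indep_labels[OF poly nd x]) auto
  finally show ?thesis by simp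
qed

lemma P_nondeg_iff_aff_dim_PI:
  fixes B :: "real^'n^'m"
  assumes poly: "polytope (Ppoly B)"
  shows "P_nondeg B \<longleftrightarrow>
    (\<forall>x\<in>mixed. aff_dim (PI B (labelsX B x)) = int CARD('m) - int (card (labelsX B x)))"
proof (intro iffI ballI)
  fix x :: "real^'m" assume nd: "P_nondeg B" and x: "x \<in> mixed"
  have "card (labelsX B x) \<le> CARD('m)"
    using P_labels_bounded_iff_P_nondeg[OF poly] nd to_Ppoly_mem[OF poly x] labelsP_to_Ppoly[OF poly x]
    unfolding P_labels_bounded_def by metis
  then show "aff_dim (PI B (labelsX B x)) = int CARD('m) - int (card (labelsX B x))"
    using aff_dim_PI_labelsP[OF poly nd to_Ppoly_mem[OF poly x]] labelsP_to_Ppoly[OF poly x]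
    by (simp add: of_nat_diff)
next
  assume a: "\<forall>x\<in>mixed. aff_dim (PI B (labelsX B x)) = int CARD('m) - int (card (labelsX B x))"
  show "P_nondeg B" unfolding P_nondeg_def
  proof (rule ballI, rule ccontr)
    fix x :: "real^'m" assume x: "x \<in> mixed" and c: "\<not> card (bestresp2 B x) \<le> card (supp x)"
    have "card (supp x) \<le> CARD('m)" by (rule card_mono) auto
    then have "card (labelsX B x) > CARD('m)" using c card_labelsX_mixed[OF x, of B] by linarith
    moreover have "to_Ppoly B x \<in> PI B (labelsX B x)"
      using to_Ppoly_mem[OF poly x] labelsP_to_Ppoly[OF poly x] by (simp add: PI_def)
    then have "aff_dim (PI B (labelsX B x)) \<ge> 0" by (metis aff_dim_negative_iff equals0D not_less)
    ultimately show False using a x by force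
  qed
qed

lemma exists_strict_P_point: "\<exists>p0. \<forall>l. inner (P_normal (B::real^'n^'m) l) p0 < P_rhs l"
proof -
  define S where "S = (\<Sum>j\<in>UNIV. \<Sum>i\<in>UNIV. \<bar>B $ i $ j\<bar>)"
  have S0: "S \<ge> 0" unfolding S_def by (intro sum_nonneg) auto
  define t where "t = 1 / (1 + S)"
  have t0: "t > 0" and tS: "t * S < 1" using S0 by (simp_all add: t_def)
  have "inner (P_normal B l) (\<chi> i. t) < P_rhs l" for l
  proof (cases l)
    case (Inl i) then show ?thesis using t0 by (simp add: inner_P_normal P_rhs_def)
  next
    case (Inr j)
    have "(transpose B *v (\<chi> i. t)) $ j = t * (\<Sum>i\<in>UNIV. B $ i $ j)"
      by (simp add: matrix_vector_mult_def transpose_def sum_distrib_left mult.commute)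
    also have "\<dots> \<le> t * (\<Sum>i\<in>UNIV. \<bar>B $ i $ j\<bar>)"
      using t0 by (intro mult_left_mono sum_mono) auto
    also have "\<dots> \<le> t * S"
      unfolding S_def using t0
      by (intro mult_left_mono member_le_sum[of j UNIV "\<lambda>j. \<Sum>i\<in>UNIV. \<bar>B $ i $ j\<bar>"])
        (auto intro: sum_nonneg)
    finally show ?thesis using tS Inr by (simp add: inner_P_normal P_rhs_def)
  qed
  then show ?thesis by blast
qed

lemma P_redundant_iff_ineqs:
  "P_redundant B l \<longleftrightarrow> ineqs (- {l}) (P_normal B) P_rhs = ineqs UNIV (P_normal B) P_rhs"
proof -
  have "{x. \<forall>l'. l' \<noteq> l \<longrightarrow> Pineq B l' x} = ineqs (- {l}) (P_normal B) P_rhs"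
    by (auto simp: ineqs_def Pineq_iff_inner)
  then show ?thesis by (simp add: P_redundant_def Ppoly_eq_ineqs)
qed

lemma aff_dim_Ppoly: "aff_dim (Ppoly (B::real^'n^'m)) = int CARD('m)"
  using exists_strict_P_point[of B] aff_dim_ineqs_if_strict by (metis Ppoly_eq_ineqs DIM_cart DIM_real mult_1_right)

lemma P_nondeg_iff_simple_redundant_nonbinding:
  fixes B :: "real^'n^'m"
  assumes poly: "polytope (Ppoly B)"
  shows "P_nondeg B \<longleftrightarrow> simple_polytope (Ppoly B) \<and>
    (\<forall>l. P_redundant B l \<longrightarrow> (\<forall>x\<in>Ppoly B. \<not> Pbind B l x))"
proof -
  obtain p0 where p0: "\<forall>l. inner (P_normal B l) p0 < P_rhs l" using exists_strict_P_point by blast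
  note facets_le = card_facets_le_card_tight[OF p0, folded Ppoly_eq_ineqs labelsP_eq_tight]
  note le_facets = card_tight_le_card_facets[OF p0, folded Ppoly_eq_ineqs labelsP_eq_tight]
  show ?thesis
  proof (intro iffI conjI allI impI ballI notI)
    assume "P_nondeg B"
    then have b: "P_labels_bounded B" using P_labels_bounded_iff_P_nondeg[OF poly] by simp
    show "simple_polytope (Ppoly B)" unfolding simple_polytope_def
    proof (intro conjI ballI poly)
      fix x assume x: "x \<in> Ppoly B"
      have "card {F. F facet_of Ppoly B \<and> x \<in> F} \<le> CARD('m)"
        using facets_le[OF x] b x unfolding P_labels_bounded_def by (meson order_trans)
      then show "int (card {F. F facet_of Ppoly B \<and> x \<in> F}) \<le> aff_dim (Ppoly B)"
        by (simp add: aff_dim_Ppoly)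
    qed
    fix l x assume r: "P_redundant B l" and x: "x \<in> Ppoly B" and "Pbind B l x"
    then obtain x' where "x' \<in> Ppoly B" "card (labelsP B x') > DIM(real^'m)"
      using ineqs_redundant_tight_imp_many_tight[of "P_normal B" P_rhs l x] polytope_imp_bounded[OF poly]
      by (auto simp: P_redundant_iff_ineqs Ppoly_eq_ineqs labelsP_eq_tight tight_def Pbind_iff_inner)
    then show False using b unfolding P_labels_bounded_def by fastforce
  next
    assume h: "simple_polytope (Ppoly B) \<and> (\<forall>l. P_redundant B l \<longrightarrow> (\<forall>x\<in>Ppoly B. \<not> Pbind B l x))"
    have "card (labelsP B x) \<le> CARD('m)" if x: "x \<in> Ppoly B" for x
    proof -
      have "card (labelsP B x) \<le> card {F. F facet_of Ppoly B \<and> x \<in> F}"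
        using le_facets[OF _ x] poly h x
        by (auto simp: P_redundant_iff_ineqs labelsP_def Ppoly_eq_ineqs[symmetric])
      also have "int \<dots> \<le> aff_dim (Ppoly B)" using h x unfolding simple_polytope_def by blast
      finally show ?thesis by (simp add: aff_dim_Ppoly)
    qed
    then show "P_nondeg B"
      using P_labels_bounded_iff_P_nondeg[OF poly] unfolding P_labels_bounded_def by blast
  qed
qed

section \<open>Dominated strategies\<close>

lemma inner_matrix_vector_transpose: "inner x (B *v y) = inner y (transpose B *v (x::real^'m))"
  unfolding inner_vec_def matrix_vector_mult_def transpose_def
  by (simp add: sum_distrib_left mult_ac) (rule sum.swap)

lemma matrix_vector_axis: "B *v axis j 1 = column j B"
  by (simp add: vec_eq_iff matrix_vector_mult_def column_def axis_def if_distrib sum.delta cong: if_cong)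

lemma convex_mixed: "convex (mixed :: (real^'n) set)"
  unfolding convex_def mixed_def
  by (auto simp: sum.distrib sum_distrib_left[symmetric])

lemma compact_mixed: "compact (mixed :: (real^'n) set)"
proof -
  have "closed ((\<Inter>i. {x::real^'n. 0 \<le> x $ i}) \<inter> {x. (\<Sum>i\<in>UNIV. x $ i) = 1})"
    by (intro closed_Int closed_INT ballI closed_Collect_le closed_Collect_eq continuous_intros)
  moreover have "(mixed :: (real^'n) set) = (\<Inter>i. {x. 0 \<le> x $ i}) \<inter> {x. (\<Sum>i\<in>UNIV. x $ i) = 1}"
    by (auto simp: mixed_def)
  ultimately have "closed (mixed :: (real^'n) set)" by simp
  moreover have "norm x \<le> 1" if "x \<in> mixed" for x :: "real^'n"
  proof -
    have "norm x \<le> (\<Sum>i\<in>UNIV. \<bar>x $ i\<bar>)" by (rule norm_le_l1_cart)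
    also have "\<dots> = 1" using that by (simp add: mixed_def)
    finally show ?thesis .
  qed
  then have "bounded (mixed :: (real^'n) set)" unfolding bounded_iff by blast
  ultimately show ?thesis by (simp add: compact_eq_bounded_closed)
qed

lemma convex_compact_affine_image:
  fixes B :: "real^'n^'m"
  assumes "convex S" "compact S"
  shows "convex ((\<lambda>y. B *v y - c) ` S)" "compact ((\<lambda>y. B *v y - c) ` S)"
proof -
  have e: "(\<lambda>y. B *v y - c) ` S = (\<lambda>v. v - c) ` ((\<lambda>y. B *v y) ` S)" by (simp add: image_image)
  show "convex ((\<lambda>y. B *v y - c) ` S)" unfolding e
    by (rule convex_translation_subtract[OF convex_linear_image[OF matrix_vector_mul_linear assms(1)]])
  have "continuous_on S (\<lambda>y. B *v y)"
    by (rule linear_continuous_on) (simp add: linear_conv_bounded_linear[symmetric])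
  then show "compact ((\<lambda>y. B *v y - c) ` S)" unfolding e
    by (rule compact_translation_subtract[OF compact_continuous_image[OF _ assms(2)]])
qed

lemma nonneg_normal_if_avoids_pos_orthant:
  fixes D :: "(real^'m) set"
  assumes D: "convex D" "0 \<in> D" and avoid: "\<forall>d\<in>D. \<not> (\<forall>i. 0 < d $ i)"
  shows "\<exists>a. a \<noteq> 0 \<and> (\<forall>i. 0 \<le> a $ i) \<and> (\<forall>d\<in>D. inner a d \<le> 0)"
proof -
  define T :: "(real^'m) set" where "T = {p. \<forall>i. 0 < p $ i}"
  define one :: "real^'m" where "one = (\<chi> k. 1)"
  have "T = (\<Inter>i. {p. 0 < inner (axis i 1) p})" by (auto simp: T_def inner_axis')
  then have "convex T" by (simp add: convex_INT convex_halfspace_gt)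
  moreover have "one \<in> T" by (simp add: T_def one_def)
  moreover have "D \<inter> T = {}" using avoid by (auto simp: T_def)
  ultimately obtain a b where a0: "a \<noteq> 0" and aD: "\<forall>d\<in>D. inner a d \<le> b"
    and aT: "\<forall>p\<in>T. b \<le> inner a p"
    using separating_hyperplane_sets[OF D(1)] D(2) by blast
  have b0: "0 \<le> b" using aD D(2) by force
  have "0 \<le> a $ i" for i
  proof (rule ccontr)
    assume ai: "\<not> 0 \<le> a $ i"
    define t where "t = (\<bar>inner a one\<bar> + 1) / (- a $ i)"
    have "t > 0" "t * a $ i = - (\<bar>inner a one\<bar> + 1)" using ai by (simp_all add: t_def not_le divide_pos_neg)
    moreover have "inner a (t *\<^sub>R axis i 1 + one) = t * a $ i + inner a one"
      by (simp add: inner_add_right inner_axis)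
    ultimately have "t *\<^sub>R axis i 1 + one \<in> T" "inner a (t *\<^sub>R axis i 1 + one) < 0"
      by (auto simp: T_def one_def axis_def)
    then show False using aT b0 by fastforce
  qed
  moreover have "b \<le> 0"
  proof (rule ccontr)
    assume "\<not> b \<le> 0"
    define e where "e = b / (2 * (\<bar>inner a one\<bar> + 1))"
    have e0: "e > 0" using \<open>\<not> b \<le> 0\<close> by (simp add: e_def)
    have "e *\<^sub>R one \<in> T" using e0 by (simp add: T_def one_def)
    then have "b \<le> e * inner a one" using aT by fastforce
    also have "\<dots> < e * (2 * (\<bar>inner a one\<bar> + 1))" using e0 by (intro mult_strict_left_mono) auto
    also have "\<dots> = b" by (simp add: e_def)
    finally show False by simp
  qed
  ultimately show ?thesis using a0 aD by force
qed

lemma nonneg_normal_if_avoids_nonneg_orthant: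
  fixes D :: "(real^'m) set"
  assumes D: "convex D" "compact D" "D \<noteq> {}" and avoid: "\<forall>d\<in>D. \<not> (\<forall>i. 0 \<le> d $ i)"
  shows "\<exists>a. (\<forall>i. 0 \<le> a $ i) \<and> (\<forall>d\<in>D. inner a d < 0)"
proof -
  define N :: "(real^'m) set" where "N = {p. \<forall>i. 0 \<le> p $ i}"
  have "N = (\<Inter>i. {p. 0 \<le> inner (axis i 1) p})" by (auto simp: N_def inner_axis')
  then have "convex N" "closed N" by (simp_all add: convex_INT convex_halfspace_ge closed_INT closed_halfspace_ge)
  moreover have "D \<inter> N = {}" using avoid by (auto simp: N_def)
  ultimately obtain a b where aD: "\<forall>d\<in>D. inner a d < b" and aN: "\<forall>p\<in>N. b < inner a p"
    using separating_hyperplane_compact_closed[OF D] by blast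
  have "0 \<in> N" by (simp add: N_def)
  then have b0: "b < 0" using aN by force
  have "0 \<le> a $ i" for i
  proof (rule ccontr)
    assume ai: "\<not> 0 \<le> a $ i"
    define t where "t = (\<bar>b\<bar> + 1) / (- a $ i)"
    have t: "t > 0" "t * a $ i = - (\<bar>b\<bar> + 1)" using ai by (simp_all add: t_def not_le divide_pos_neg)
    then have "t *\<^sub>R axis i 1 \<in> N" by (auto simp: N_def axis_def)
    moreover have "inner a (t *\<^sub>R axis i 1) < b" using t by (simp add: inner_axis)
    ultimately show False using aN by fastforce
  qed
  then show ?thesis using aD b0 by force
qed

lemma mixed_component_less_one:
  assumes y: "y \<in> mixed" "y \<noteq> axis j 1"
  shows "y $ j < 1"
proof (rule ccontr)
  assume "\<not> y $ j < 1"
  moreover have "y $ j \<le> 1"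
    using y(1) member_le_sum[of j UNIV "\<lambda>i. y $ i"] by (simp add: mixed_def)
  ultimately have yj1: "y $ j = 1" by simp
  then have "(\<Sum>k\<in>UNIV - {j}. y $ k) = 0"
    using y(1) sum.remove[of UNIV j "\<lambda>k. y $ k"] by (simp add: mixed_def)
  then have "\<forall>k\<in>UNIV - {j}. y $ k = 0"
    using y(1) by (subst (asm) sum_nonneg_eq_0_iff) (auto simp: mixed_def)
  then have "y = axis j 1" using yj1 by (auto simp: vec_eq_iff axis_def)
  then show False using y(2) by simp
qed

text \<open>If column j is weakly dominated by y, then on the remaining constraints
(B^T x)_j is at most a y-weighted average of payoffs, y_j (B^T x)_j + (1 - y_j),
which forces (B^T x)_j \<le> 1 as y_j < 1.\<close>
lemma weakly_dominated_imp_P_redundant: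
  fixes B :: "real^'n^'m"
  assumes y: "y \<in> mixed" "y \<noteq> axis j 1" and dom: "\<forall>i. B $ i $ j \<le> (B *v y) $ i"
  shows "P_redundant B (Inr j)"
proof -
  have yj: "y $ j < 1" by (rule mixed_component_less_one[OF y])
  have "x \<in> Ppoly B" if x: "\<forall>l. l \<noteq> Inr j \<longrightarrow> Pineq B l x" for x
  proof -
    have x0: "\<forall>i. 0 \<le> x $ i" and xk: "\<And>k. k \<noteq> j \<Longrightarrow> (transpose B *v x) $ k \<le> 1"
      using x by (auto simp: Pineq_def dest: spec[of _ "Inl _"] spec[of _ "Inr _"])
    have "(transpose B *v x) $ j = inner x (column j B)" by (metis inner_column inner_commute)
    also have "\<dots> \<le> inner x (B *v y)"
      unfolding inner_vec_def using x0 dom by (intro sum_mono) (auto simp: column_def intro!: mult_left_mono)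
    also have "\<dots> = (\<Sum>k\<in>UNIV. y $ k * (transpose B *v x) $ k)"
      using inner_matrix_vector_transpose[of x B y] by (simp add: inner_vec_def)
    also have "\<dots> = y $ j * (transpose B *v x) $ j + (\<Sum>k\<in>UNIV - {j}. y $ k * (transpose B *v x) $ k)"
      by (simp add: sum.remove)
    also have "(\<Sum>k\<in>UNIV - {j}. y $ k * (transpose B *v x) $ k) \<le> (\<Sum>k\<in>UNIV - {j}. y $ k)"
      using xk y(1) by (intro sum_mono) (auto simp: mixed_def intro: mult_left_le)
    also have "(\<Sum>k\<in>UNIV - {j}. y $ k) = 1 - y $ j"
      using y(1) sum.remove[of UNIV j "\<lambda>k. y $ k"] by (simp add: mixed_def)
    finally have "(1 - y $ j) * (transpose B *v x) $ j \<le> 1 - y $ j" by (simp add: algebra_simps)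
    then have "(transpose B *v x) $ j \<le> 1" using yj by simp
    then have "(transpose B *v x) $ k \<le> 1" for k using xk by (cases "k = j") auto
    then show ?thesis using x0 by (simp add: mem_Ppoly_iff)
  qed
  then show ?thesis by (auto simp: P_redundant_def Ppoly_def)
qed

lemma strictly_dominated_imp_not_Pbind:
  fixes B :: "real^'n^'m"
  assumes y: "y \<in> mixed" and dom: "\<forall>i. B $ i $ j < (B *v y) $ i" and x: "x \<in> Ppoly B"
  shows "\<not> Pbind B (Inr j) x"
proof
  assume "Pbind B (Inr j) x"
  then have xj: "(transpose B *v x) $ j = 1" by (simp add: Pbind_def)
  have x0: "\<forall>i. 0 \<le> x $ i" and x1: "\<And>k. (transpose B *v x) $ k \<le> 1"
    using x by (auto simp: mem_Ppoly_iff)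
  have "x \<noteq> 0" using xj by auto
  then obtain i0 where "x $ i0 \<noteq> 0" by (metis vec_eq_iff zero_index)
  then have i0: "x $ i0 > 0" using x0 by (simp add: less_le)
  have "(transpose B *v x) $ j = (\<Sum>i\<in>UNIV. x $ i * B $ i $ j)"
    by (simp add: matrix_vector_mult_def transpose_def mult.commute)
  also have "\<dots> < (\<Sum>i\<in>UNIV. x $ i * (B *v y) $ i)"
  proof (rule sum_strict_mono_ex1)
    show "\<forall>i\<in>UNIV. x $ i * B $ i $ j \<le> x $ i * (B *v y) $ i"
      using x0 dom by (simp add: less_imp_le mult_left_mono)
    show "\<exists>i\<in>UNIV. x $ i * B $ i $ j < x $ i * (B *v y) $ i"
      using i0 dom[rule_format, of i0] by (intro bexI[of _ i0]) simp_all
  qed simp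
  also have "\<dots> = (\<Sum>k\<in>UNIV. y $ k * (transpose B *v x) $ k)"
    using inner_matrix_vector_transpose[of x B y] by (simp add: inner_vec_def)
  also have "\<dots> \<le> (\<Sum>k\<in>UNIV. y $ k)"
    using x1 y by (intro sum_mono) (auto simp: mixed_def intro: mult_left_le)
  also have "\<dots> = 1" using y by (simp add: mixed_def)
  finally show False using xj by simp
qed

text \<open>A small negative multiple of the i-th unit vector violates only x_i \<ge> 0.\<close>
lemma nonneg_constraint_not_P_redundant:
  fixes B :: "real^'n^'m"
  shows "\<not> P_redundant B (Inl i)"
proof
  assume r: "P_redundant B (Inl i)"
  define e where "e = 1 / (1 + (\<Sum>k\<in>UNIV. \<bar>B $ i $ k\<bar>))"
  have S0: "(\<Sum>k\<in>UNIV. \<bar>B $ i $ k\<bar>) \<ge> 0" by (intro sum_nonneg) auto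
  then have p1: "1 + (\<Sum>k\<in>UNIV. \<bar>B $ i $ k\<bar>) > 0" by linarith
  then have e0: "e > 0" by (simp add: e_def)
  define y :: "real^'m" where "y = - e *\<^sub>R axis i 1"
  have "(transpose B *v y) $ k \<le> 1" for k
  proof -
    have "(transpose B *v y) $ k = e * (- B $ i $ k)"
      by (simp add: y_def matrix_vector_mult_def transpose_def axis_def if_distrib sum.delta cong: if_cong)
    also have "\<dots> \<le> e * (\<Sum>k\<in>UNIV. \<bar>B $ i $ k\<bar>)"
      using e0 member_le_sum[of k UNIV "\<lambda>k. \<bar>B $ i $ k\<bar>"] by (intro mult_left_mono) auto
    also have "\<dots> \<le> 1" using p1 by (simp add: e_def pos_divide_le_eq)
    finally show ?thesis .
  qed
  then have "\<forall>l. l \<noteq> Inl i \<longrightarrow> Pineq B l y"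
    by (auto simp: Pineq_def y_def axis_def split: sum.split)
  moreover have "y \<notin> Ppoly B" using e0 by (auto simp: mem_Ppoly_iff y_def axis_def dest: spec[of _ i])
  ultimately show False using r unfolding P_redundant_def by blast
qed

lemma best_response_if_not_strictly_dominated:
  fixes B :: "real^'n^'m"
  assumes nsd: "\<not> (\<exists>y\<in>mixed. \<forall>i. B $ i $ j < (B *v y) $ i)"
  shows "\<exists>x\<in>mixed. j \<in> bestresp2 B x"
proof -
  define D where "D = (\<lambda>y. B *v y - column j B) ` mixed"
  have "convex D" unfolding D_def by (rule convex_compact_affine_image[OF convex_mixed compact_mixed])
  moreover have "0 \<in> D" unfolding D_def
    by (rule image_eqI[of _ _ "axis j 1"]) (simp_all add: matrix_vector_axis axis_mixed)
  moreover have "\<forall>d\<in>D. \<not> (\<forall>i. 0 < d $ i)" using nsd by (auto simp: D_def column_def)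
  ultimately obtain a where a0: "a \<noteq> 0" "\<forall>i. 0 \<le> a $ i" and aD: "\<forall>d\<in>D. inner a d \<le> 0"
    using nonneg_normal_if_avoids_pos_orthant by blast
  have colle: "inner a (column k B) \<le> inner a (column j B)" for k
  proof -
    have "column k B - column j B \<in> D" unfolding D_def
      by (rule image_eqI[of _ _ "axis k 1"]) (simp_all add: matrix_vector_axis axis_mixed)
    then show ?thesis using aD by (fastforce simp: inner_diff_right)
  qed
  define s where "s = (\<Sum>i\<in>UNIV. a $ i)"
  have s0: "s > 0" unfolding s_def by (rule sum_pos_if_nonneg_nonzero[OF a0(2,1)])
  define x where "x = (1 / s) *\<^sub>R a"
  have x: "x \<in> mixed" using normalized_mixed(1)[OF a0(2,1)] by (simp add: x_def s_def)
  have bx: "(transpose B *v x) $ k = inner a (column k B) / s" for k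
    by (simp add: x_def matrix_vector_mult_scaleR inner_column[symmetric] inner_commute)
  have "max_payoff2 B x = (transpose B *v x) $ j"
    unfolding max_payoff2_def
    by (rule Max_range_eqI[of _ _ j]) (use colle s0 in \<open>simp_all add: bx divide_right_mono\<close>)
  then have "j \<in> bestresp2 B x" by (simp add: bestresp2_eq)
  then show ?thesis using x by blast
qed

lemma column_strictly_best_if_not_weakly_dominated:
  fixes B :: "real^'n^'m"
  assumes nwd: "\<not> (\<exists>y\<in>mixed. y $ j = 0 \<and> (\<forall>i. B $ i $ j \<le> (B *v y) $ i))"
  shows "\<exists>w. (\<forall>i. 0 \<le> w $ i) \<and> (\<forall>k. k \<noteq> j \<longrightarrow> (transpose B *v w) $ k < (transpose B *v w) $ j)"
proof (cases "\<exists>k::'n. k \<noteq> j")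
  case False
  then show ?thesis by (intro exI[of _ 0]) auto
next
  case True
  then obtain k0 where k0: "k0 \<noteq> j" by blast
  define M where "M = mixed \<inter> {y::real^'n. inner (axis j 1) y = 0}"
  have Mm: "y \<in> M \<longleftrightarrow> y \<in> mixed \<and> y $ j = 0" for y by (simp add: M_def inner_axis')
  define D where "D = (\<lambda>y. B *v y - column j B) ` M"
  have "convex M" "compact M" unfolding M_def
    using convex_mixed compact_mixed by (auto intro: convex_Int convex_hyperplane closed_hyperplane)
  then have cD: "convex D" "compact D" unfolding D_def by (rule convex_compact_affine_image)+
  have "axis k 1 \<in> M" if "k \<noteq> j" for k using that axis_mixed[of k] by (simp add: Mm axis_def)
  then have Dk: "column k B - column j B \<in> D" if "k \<noteq> j" for k
    unfolding D_def using that by (intro image_eqI[of _ _ "axis k 1"]) (simp_all add: matrix_vector_axis)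
  have "D \<noteq> {}" using Dk[OF k0] by blast
  moreover have "\<forall>d\<in>D. \<not> (\<forall>i. 0 \<le> d $ i)" using nwd by (auto simp: D_def Mm column_def)
  ultimately obtain a where a0: "\<forall>i. 0 \<le> a $ i" and aD: "\<forall>d\<in>D. inner a d < 0"
    using nonneg_normal_if_avoids_nonneg_orthant[OF cD] by blast
  have "(transpose B *v a) $ k < (transpose B *v a) $ j" if "k \<noteq> j" for k
    using aD Dk[OF that] by (force simp: inner_diff_right inner_column[symmetric] inner_commute)
  then show ?thesis using a0 by blast
qed

text \<open>Scaling v so that the largest payoff other than the j-th becomes at most 1
gives a point violating only the j-th payoff constraint.\<close>
lemma not_P_redundant_if_column_strictly_best:
  fixes B :: "real^'n^'m"
  assumes v0: "\<forall>i. 0 \<le> v $ i"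
    and best: "\<And>k. k \<noteq> j \<Longrightarrow> (transpose B *v v) $ k < (transpose B *v v) $ j"
    and pos: "(transpose B *v v) $ j > 0"
  shows "\<not> P_redundant B (Inr j)"
proof
  assume r: "P_redundant B (Inr j)"
  let ?s = "(transpose B *v v) $ j"
  define M where "M = Max (insert (?s / 2) ((\<lambda>k. (transpose B *v v) $ k) ` (- {j})))"
  have "M \<in> insert (?s / 2) ((\<lambda>k. (transpose B *v v) $ k) ` (- {j}))"
    unfolding M_def by (intro Max_in) auto
  then have Mlt: "M < ?s" using best pos by auto
  have "?s / 2 \<le> M" unfolding M_def by (rule Max_ge) auto
  then have M0: "M > 0" using pos by linarith
  have Mge: "(transpose B *v v) $ k \<le> M" if "k \<noteq> j" for k
    unfolding M_def by (rule Max_ge) (use that in auto)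
  define z where "z = (1 / M) *\<^sub>R v"
  have bz: "(transpose B *v z) $ k = (transpose B *v v) $ k / M" for k
    by (simp add: z_def matrix_vector_mult_scaleR)
  have "0 \<le> z $ i" for i using v0 M0 by (simp add: z_def)
  then have "Pineq B l z" if "l \<noteq> Inr j" for l
    using that M0 Mge by (cases l) (auto simp: Pineq_def bz pos_divide_le_eq)
  then have "z \<in> Ppoly B" using r unfolding P_redundant_def by blast
  moreover have "(transpose B *v z) $ j > 1" using Mlt M0 by (simp add: bz)
  ultimately show False by (auto simp: mem_Ppoly_iff not_le[symmetric])
qed

lemma weakly_dominated_if_P_redundant_binding:
  fixes B :: "real^'n^'m"
  assumes x: "x \<in> Ppoly B" and b: "Pbind B (Inr j) x" and r: "P_redundant B (Inr j)"
  shows "\<exists>y\<in>mixed. y $ j = 0 \<and> (\<forall>i. B $ i $ j \<le> (B *v y) $ i)"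
proof (rule ccontr)
  assume "\<not> ?thesis"
  then obtain w where w0: "\<forall>i. 0 \<le> w $ i"
    and wk: "\<And>k. k \<noteq> j \<Longrightarrow> (transpose B *v w) $ k < (transpose B *v w) $ j"
    using column_strictly_best_if_not_weakly_dominated by blast
  have x0: "\<forall>i. 0 \<le> x $ i" and x1: "\<And>k. (transpose B *v x) $ k \<le> 1"
    using x by (auto simp: mem_Ppoly_iff)
  have xj: "(transpose B *v x) $ j = 1" using b by (simp add: Pbind_def)
  text \<open>A step from x towards w small enough to keep the j-th payoff positive.\<close>
  define c where "c = (transpose B *v w) $ j"
  define t where "t = 1 / (2 * (\<bar>c\<bar> + 1))"
  have t0: "t > 0" by (simp add: t_def add_pos_nonneg)
  have "t * \<bar>c\<bar> < t * (\<bar>c\<bar> + 1)" using t0 by simp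
  also have "\<dots> = 1 / 2" by (simp add: t_def)
  finally have tc: "t * \<bar>c\<bar> < 1 / 2" .
  define v where "v = x + t *\<^sub>R w"
  have bv: "(transpose B *v v) $ k = (transpose B *v x) $ k + t * (transpose B *v w) $ k" for k
    by (simp add: v_def matrix_vector_right_distrib matrix_vector_mult_scaleR)
  have "\<forall>i. 0 \<le> v $ i" using x0 w0 t0 by (simp add: v_def)
  moreover have "(transpose B *v v) $ k < (transpose B *v v) $ j" if "k \<noteq> j" for k
    using mult_strict_left_mono[OF wk[OF that] t0] x1[of k] by (simp add: bv xj)
  moreover have "t * (- \<bar>c\<bar>) \<le> t * c" using t0 by (intro mult_left_mono) auto
  then have "(transpose B *v v) $ j > 0" using tc by (simp add: bv xj c_def[symmetric])
  ultimately show False using not_P_redundant_if_column_strictly_best r by blast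
qed

lemma P_nondeg_iff_simple_dominance:
  fixes B :: "real^'n^'m"
  assumes poly: "polytope (Ppoly B)"
  shows "P_nondeg B \<longleftrightarrow> simple_polytope (Ppoly B) \<and>
    (\<forall>j. (\<exists>y\<in>mixed. y \<noteq> axis j 1 \<and> (\<forall>i. B $ i $ j \<le> (B *v y) $ i)) \<longrightarrow>
         (\<exists>y'\<in>mixed. \<forall>i. B $ i $ j < (B *v y') $ i))"
  unfolding P_nondeg_iff_simple_redundant_nonbinding[OF poly]
proof (intro conj_cong refl iffI allI impI ballI notI)
  fix j assume red: "\<forall>l. P_redundant B l \<longrightarrow> (\<forall>x\<in>Ppoly B. \<not> Pbind B l x)"
    and wd: "\<exists>y\<in>mixed. y \<noteq> axis j 1 \<and> (\<forall>i. B $ i $ j \<le> (B *v y) $ i)"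
  show "\<exists>y'\<in>mixed. \<forall>i. B $ i $ j < (B *v y') $ i"
  proof (rule ccontr)
    assume "\<not> ?thesis"
    then obtain x where x: "x \<in> mixed" "j \<in> bestresp2 B x"
      using best_response_if_not_strictly_dominated by blast
    have "Pbind B (Inr j) (to_Ppoly B x)"
      using labelsP_to_Ppoly[OF poly x(1)] x(2) by (auto simp: labelsP_def labelsX_def)
    moreover have "P_redundant B (Inr j)" using wd weakly_dominated_imp_P_redundant by blast
    ultimately show False using red to_Ppoly_mem[OF poly x(1)] by blast
  qed
next
  fix l x assume dom: "\<forall>j. (\<exists>y\<in>mixed. y \<noteq> axis j 1 \<and> (\<forall>i. B $ i $ j \<le> (B *v y) $ i)) \<longrightarrow>
         (\<exists>y'\<in>mixed. \<forall>i. B $ i $ j < (B *v y') $ i)"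
    and r: "P_redundant B l" and x: "x \<in> Ppoly B" and b: "Pbind B l x"
  show False
  proof (cases l)
    case (Inl i) then show ?thesis using nonneg_constraint_not_P_redundant r by blast
  next
    case (Inr j)
    obtain y where y: "y \<in> mixed" "y $ j = 0" "\<forall>i. B $ i $ j \<le> (B *v y) $ i"
      using weakly_dominated_if_P_redundant_binding[OF x] b r Inr by blast
    have "y \<noteq> axis j 1" using y(2) by (auto simp: axis_def)
    then obtain y' where "y' \<in> mixed" "\<forall>i. B $ i $ j < (B *v y') $ i" using dom y by blast
    then show False using strictly_dominated_imp_not_Pbind x b Inr by blast
  qed
qed

section \<open>Both players\<close>

definition swap_sum :: "'a + 'b \<Rightarrow> 'b + 'a" where
  "swap_sum l = (case l of Inl i \<Rightarrow> Inr i | Inr j \<Rightarrow> Inl j)"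

lemma swap_sum_simps [simp]: "swap_sum (Inl i) = Inr i" "swap_sum (Inr j) = Inl j"
  by (simp_all add: swap_sum_def)

lemma swap_sum_swap_sum [simp]: "swap_sum (swap_sum l) = l"
  by (cases l) simp_all

lemma inj_swap_sum: "inj swap_sum"
  by (metis injI swap_sum_swap_sum)

lemma all_swap_sum: "(\<forall>l. P (swap_sum l)) \<longleftrightarrow> (\<forall>l. P l)"
  by (metis swap_sum_swap_sum)

lemma Qineq_eq_Pineq: "Qineq A l y \<longleftrightarrow> Pineq (transpose A) (swap_sum l) y"
  by (cases l) (simp_all add: Qineq_def Pineq_def transpose_transpose)

lemma Qbind_eq_Pbind: "Qbind A l y \<longleftrightarrow> Pbind (transpose A) (swap_sum l) y"
  by (cases l) (simp_all add: Qbind_def Pbind_def transpose_transpose)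

lemma Qpoly_eq_Ppoly: "Qpoly A = Ppoly (transpose A)"
  unfolding Qpoly_def Ppoly_def Qineq_eq_Pineq using all_swap_sum by metis

lemma labelsQ_eq_labelsP: "labelsQ A y = swap_sum ` labelsP (transpose A) y"
proof (rule set_eqI)
  fix l show "l \<in> labelsQ A y \<longleftrightarrow> l \<in> swap_sum ` labelsP (transpose A) y"
    by (auto simp: labelsQ_def labelsP_def Qbind_eq_Pbind image_iff)
qed

lemma card_swap_sum_image: "card (swap_sum ` S) = card S"
  by (rule card_image) (meson inj_on_subset inj_swap_sum subset_UNIV)

lemma bestresp1_eq_bestresp2: "bestresp1 A y = bestresp2 (transpose A) y"
  by (simp add: bestresp1_def bestresp2_def transpose_transpose)

lemma labelsY_eq_labelsX: "labelsY A y = swap_sum ` labelsX (transpose A) y"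
  by (auto simp: labelsY_def labelsX_def bestresp1_eq_bestresp2 image_Un image_image)

lemma QJ_eq_PI: "QJ A J = PI (transpose A) (swap_sum ` J)"
proof -
  have "J \<subseteq> labelsQ A y \<longleftrightarrow> swap_sum ` J \<subseteq> labelsP (transpose A) y" for y
  proof
    assume "J \<subseteq> labelsQ A y"
    then have "swap_sum ` J \<subseteq> swap_sum ` swap_sum ` labelsP (transpose A) y"
      unfolding labelsQ_eq_labelsP by (rule image_mono)
    then show "swap_sum ` J \<subseteq> labelsP (transpose A) y" by (simp add: image_image)
  next
    assume "swap_sum ` J \<subseteq> labelsP (transpose A) y"
    then have "swap_sum ` swap_sum ` J \<subseteq> swap_sum ` labelsP (transpose A) y" by (rule image_mono)
    then show "J \<subseteq> labelsQ A y" by (simp add: image_image labelsQ_eq_labelsP)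
  qed
  then show ?thesis by (auto simp: QJ_def PI_def Qpoly_eq_Ppoly)
qed

lemma Q_redundant_eq_P_redundant: "Q_redundant A l \<longleftrightarrow> P_redundant (transpose A) (swap_sum l)"
proof -
  have "(\<forall>l'. l' \<noteq> l \<longrightarrow> Qineq A l' y) \<longleftrightarrow> (\<forall>l'. l' \<noteq> swap_sum l \<longrightarrow> Pineq (transpose A) l' y)" for y
    unfolding Qineq_eq_Pineq by (metis swap_sum_swap_sum)
  then show ?thesis by (simp add: Q_redundant_def P_redundant_def Qpoly_eq_Ppoly)
qed

lemma nondegenerate_iff_P_nondeg:
  "nondegenerate A B \<longleftrightarrow> P_nondeg B \<and> P_nondeg (transpose A)"
  by (simp add: nondegenerate_def P_nondeg_def bestresp1_eq_bestresp2)

lemma transpose_nth: "transpose A $ i $ j = A $ j $ i"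
  by (simp add: transpose_def)

lemma ball_ball_conj_iff:
  "S \<noteq> {} \<Longrightarrow> T \<noteq> {} \<Longrightarrow> (\<forall>x\<in>S. \<forall>y\<in>T. P x \<and> Q y) \<longleftrightarrow> (\<forall>x\<in>S. P x) \<and> (\<forall>y\<in>T. Q y)"
  by blast

lemma mixed_nonempty: "mixed \<noteq> {}"
  using axis_mixed by blast

lemma nondegenerate_iff_labels_bounded:
  fixes A B :: "real^'n^'m"
  assumes "polytope (Ppoly B)" "polytope (Qpoly A)"
  shows "nondegenerate A B \<longleftrightarrow>
    (\<forall>x\<in>Ppoly B. card (labelsP B x) \<le> CARD('m)) \<and> (\<forall>y\<in>Qpoly A. card (labelsQ A y) \<le> CARD('n))"
proof -
  have "(\<forall>y\<in>Qpoly A. card (labelsQ A y) \<le> CARD('n)) \<longleftrightarrow> P_labels_bounded (transpose A)"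
    by (simp add: P_labels_bounded_def Qpoly_eq_Ppoly labelsQ_eq_labelsP card_swap_sum_image)
  then show ?thesis
    using assms P_labels_bounded_iff_P_nondeg[of B] P_labels_bounded_iff_P_nondeg[of "transpose A"]
    by (simp add: nondegenerate_iff_P_nondeg P_labels_bounded_def Qpoly_eq_Ppoly)
qed

lemma nondegenerate_iff_lin_indep_submatrices:
  fixes A B :: "real^'n^'m"
  assumes P: "polytope (Ppoly B)" and Q: "polytope (Qpoly A)"
  shows "nondegenerate A B \<longleftrightarrow> (\<forall>x\<in>mixed. \<forall>y\<in>mixed.
    lin_indep_family (\<lambda>j. \<chi> i. if i \<in> supp x then B $ i $ j else 0) (bestresp2 B x) \<and>
    lin_indep_family (\<lambda>i. \<chi> j. if j \<in> supp y then A $ i $ j else 0) (bestresp1 A y))"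
proof -
  have "P_nondeg (transpose A) \<longleftrightarrow> (\<forall>y\<in>mixed.
      lin_indep_family (\<lambda>i. \<chi> j. if j \<in> supp y then A $ i $ j else 0) (bestresp1 A y))"
    using P_nondeg_iff_lin_indep_support_columns[of "transpose A"] Q
    unfolding transpose_nth bestresp1_eq_bestresp2 by (simp add: Qpoly_eq_Ppoly)
  then show ?thesis
    unfolding nondegenerate_iff_P_nondeg ball_ball_conj_iff[OF mixed_nonempty mixed_nonempty]
    using P_nondeg_iff_lin_indep_support_columns[OF P] by simp
qed

lemma nondegenerate_iff_aff_dim:
  fixes A B :: "real^'n^'m"
  assumes P: "polytope (Ppoly B)" and Q: "polytope (Qpoly A)"
  shows "nondegenerate A B \<longleftrightarrow> (\<forall>x\<in>mixed. \<forall>y\<in>mixed.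
    aff_dim (PI B (labelsX B x)) = int CARD('m) - int (card (labelsX B x)) \<and>
    aff_dim (QJ A (labelsY A y)) = int CARD('n) - int (card (labelsY A y)))"
proof -
  have "P_nondeg (transpose A) \<longleftrightarrow> (\<forall>y\<in>mixed.
      aff_dim (QJ A (labelsY A y)) = int CARD('n) - int (card (labelsY A y)))"
    using P_nondeg_iff_aff_dim_PI[of "transpose A"] Q
    by (simp add: Qpoly_eq_Ppoly QJ_eq_PI labelsY_eq_labelsX card_swap_sum_image image_image)
  then show ?thesis
    unfolding nondegenerate_iff_P_nondeg ball_ball_conj_iff[OF mixed_nonempty mixed_nonempty]
    using P_nondeg_iff_aff_dim_PI[OF P] by simp
qed

lemma nondegenerate_iff_simple_redundant_nonbinding:
  fixes A B :: "real^'n^'m"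
  assumes P: "polytope (Ppoly B)" and Q: "polytope (Qpoly A)"
  shows "nondegenerate A B \<longleftrightarrow>
    simple_polytope (Ppoly B) \<and> simple_polytope (Qpoly A) \<and>
    (\<forall>l. P_redundant B l \<longrightarrow> (\<forall>x\<in>Ppoly B. \<not> Pbind B l x)) \<and>
    (\<forall>l. Q_redundant A l \<longrightarrow> (\<forall>y\<in>Qpoly A. \<not> Qbind A l y))"
proof -
  let ?A = "transpose A"
  have "(\<forall>l. Q_redundant A l \<longrightarrow> (\<forall>y\<in>Qpoly A. \<not> Qbind A l y)) \<longleftrightarrow>
      (\<forall>l. P_redundant ?A (swap_sum l) \<longrightarrow> (\<forall>y\<in>Ppoly ?A. \<not> Pbind ?A (swap_sum l) y))"
    by (simp add: Q_redundant_eq_P_redundant Qbind_eq_Pbind Qpoly_eq_Ppoly)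
  also have "\<dots> \<longleftrightarrow> (\<forall>l. P_redundant ?A l \<longrightarrow> (\<forall>y\<in>Ppoly ?A. \<not> Pbind ?A l y))"
    by (rule all_swap_sum)
  finally have "simple_polytope (Qpoly A) \<and> (\<forall>l. Q_redundant A l \<longrightarrow> (\<forall>y\<in>Qpoly A. \<not> Qbind A l y))
      \<longleftrightarrow> P_nondeg ?A"
    using P_nondeg_iff_simple_redundant_nonbinding[of ?A] Q by (simp add: Qpoly_eq_Ppoly)
  then show ?thesis
    unfolding nondegenerate_iff_P_nondeg using P_nondeg_iff_simple_redundant_nonbinding[OF P] by blast
qed

lemma nondegenerate_iff_simple_dominance:
  fixes A B :: "real^'n^'m"
  assumes P: "polytope (Ppoly B)" and Q: "polytope (Qpoly A)"
  shows "nondegenerate A B \<longleftrightarrow>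
    simple_polytope (Ppoly B) \<and> simple_polytope (Qpoly A) \<and>
    (\<forall>i. (\<exists>x\<in>mixed. x \<noteq> axis i 1 \<and> (\<forall>j. A $ i $ j \<le> (x v* A) $ j)) \<longrightarrow>
         (\<exists>x'\<in>mixed. \<forall>j. A $ i $ j < (x' v* A) $ j)) \<and>
    (\<forall>j. (\<exists>y\<in>mixed. y \<noteq> axis j 1 \<and> (\<forall>i. B $ i $ j \<le> (B *v y) $ i)) \<longrightarrow>
         (\<exists>y'\<in>mixed. \<forall>i. B $ i $ j < (B *v y') $ i))"
proof -
  have "simple_polytope (Qpoly A) \<and>
      (\<forall>i. (\<exists>x\<in>mixed. x \<noteq> axis i 1 \<and> (\<forall>j. A $ i $ j \<le> (x v* A) $ j)) \<longrightarrow>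
         (\<exists>x'\<in>mixed. \<forall>j. A $ i $ j < (x' v* A) $ j)) \<longleftrightarrow> P_nondeg (transpose A)"
    using P_nondeg_iff_simple_dominance[of "transpose A"] Q
    unfolding transpose_nth transpose_matrix_vector Qpoly_eq_Ppoly by simp
  then show ?thesis
    unfolding nondegenerate_iff_P_nondeg using P_nondeg_iff_simple_dominance[OF P] by blast
qed

section \<open>The symmetric game\<close>

definition vec_join :: "real^'m::finite \<Rightarrow> real^'n::finite \<Rightarrow> real^('m + 'n)" where
  "vec_join x y = (\<chi> k. case k of Inl i \<Rightarrow> x $ i | Inr j \<Rightarrow> y $ j)"

definition vec_left :: "real^('m::finite + 'n::finite) \<Rightarrow> real^'m" where
  "vec_left z = (\<chi> i. z $ Inl i)"

definition vec_right :: "real^('m::finite + 'n::finite) \<Rightarrow> real^'n" where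
  "vec_right z = (\<chi> j. z $ Inr j)"

lemma vec_join_nth [simp]: "vec_join x y $ Inl i = x $ i" "vec_join x y $ Inr j = y $ j"
  by (simp_all add: vec_join_def)

lemma vec_left_nth [simp]: "vec_left z $ i = z $ Inl i"
  and vec_right_nth [simp]: "vec_right z $ j = z $ Inr j"
  by (simp_all add: vec_left_def vec_right_def)

lemma vec_left_join [simp]: "vec_left (vec_join x y) = x"
  and vec_right_join [simp]: "vec_right (vec_join x y) = y"
  by (simp_all add: vec_eq_iff)

lemma vec_join_left_right: "vec_join (vec_left z) (vec_right z) = z"
  by (simp add: vec_eq_iff split_sum_all)

lemma sum_UNIV_sum:
  fixes f :: "'a::finite + 'b::finite \<Rightarrow> 'c::comm_monoid_add"
  shows "(\<Sum>k\<in>UNIV. f k) = (\<Sum>i\<in>UNIV. f (Inl i)) + (\<Sum>j\<in>UNIV. f (Inr j))"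
  using sum.Plus[of UNIV UNIV f] by (simp add: comp_def)

lemma card_UNIV_sum: "CARD('a::finite + 'b::finite) = CARD('a) + CARD('b)"
  using card_Plus[of "UNIV :: 'a set" "UNIV :: 'b set"] by simp

lemma Cmat_mult_vec: "Cmat A B *v z = vec_join (A *v vec_right z) (transpose B *v vec_left z)"
  by (simp add: vec_eq_iff split_sum_all matrix_vector_mult_def sum_UNIV_sum Cmat_def transpose_def)

lemma mem_Qpoly_iff: "y \<in> Qpoly A \<longleftrightarrow> (\<forall>j. 0 \<le> y $ j) \<and> (\<forall>i. (A *v y) $ i \<le> 1)"
  by (simp add: Qpoly_eq_Ppoly mem_Ppoly_iff)

lemma mem_Spoly_Cmat_iff:
  "z \<in> Spoly (Cmat A B) \<longleftrightarrow> vec_left z \<in> Ppoly B \<and> vec_right z \<in> Qpoly A"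
  by (auto simp: Spoly_def mem_Ppoly_iff mem_Qpoly_iff Cmat_mult_vec split_sum_all)

lemma card_labelsQ: "card (labelsQ A y) = card {j. y $ j = 0} + card {i. (A *v y) $ i = 1}"
  by (simp add: labelsQ_eq_labelsP card_swap_sum_image card_labelsP)

lemma card_tight_Spoly_Cmat:
  fixes A B :: "real^'n^'m"
  shows "card {k. z $ k = 0} + card {k. (Cmat A B *v z) $ k = 1}
       = card (labelsP B (vec_left z)) + card (labelsQ A (vec_right z))"
proof -
  have "card {k. z $ k = 0} = card {i. vec_left z $ i = 0} + card {j. vec_right z $ j = 0}"
    by (subst Collect_sum_eq) (simp add: card_Inl_Un_Inr)
  moreover have "card {k. (Cmat A B *v z) $ k = 1}
      = card {i. (A *v vec_right z) $ i = 1} + card {j. (transpose B *v vec_left z) $ j = 1}"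
    by (subst Collect_sum_eq) (simp add: card_Inl_Un_Inr Cmat_mult_vec)
  ultimately show ?thesis by (simp add: card_labelsP card_labelsQ)
qed

lemma labels_bounded_iff_tight_Spoly_bounded:
  fixes A B :: "real^'n^'m"
  shows "(\<forall>x\<in>Ppoly B. card (labelsP B x) \<le> CARD('m)) \<and> (\<forall>y\<in>Qpoly A. card (labelsQ A y) \<le> CARD('n))
    \<longleftrightarrow> (\<forall>z\<in>Spoly (Cmat A B). card {k. z $ k = 0} + card {k. (Cmat A B *v z) $ k = 1} \<le> CARD('m + 'n))"
proof (intro iffI conjI ballI; (elim conjE)?)
  fix z assume "\<forall>x\<in>Ppoly B. card (labelsP B x) \<le> CARD('m)" "\<forall>y\<in>Qpoly A. card (labelsQ A y) \<le> CARD('n)"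
    and "z \<in> Spoly (Cmat A B)"
  then show "card {k. z $ k = 0} + card {k. (Cmat A B *v z) $ k = 1} \<le> CARD('m + 'n)"
    by (simp add: mem_Spoly_Cmat_iff card_tight_Spoly_Cmat card_UNIV_sum add_mono)
next
  text \<open>Pad with the origin of the other polytope, which carries all of its labels.\<close>
  assume S: "\<forall>z\<in>Spoly (Cmat A B). card {k. z $ k = 0} + card {k. (Cmat A B *v z) $ k = 1} \<le> CARD('m + 'n)"
  fix x assume "x \<in> Ppoly B"
  then have "vec_join x 0 \<in> Spoly (Cmat A B)" by (simp add: mem_Spoly_Cmat_iff mem_Qpoly_iff)
  then show "card (labelsP B x) \<le> CARD('m)"
    using S[rule_format, of "vec_join x 0"]
    by (simp add: card_tight_Spoly_Cmat card_labelsQ card_UNIV_sum)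
next
  assume S: "\<forall>z\<in>Spoly (Cmat A B). card {k. z $ k = 0} + card {k. (Cmat A B *v z) $ k = 1} \<le> CARD('m + 'n)"
  fix y assume "y \<in> Qpoly A"
  then have "vec_join 0 y \<in> Spoly (Cmat A B)" by (simp add: mem_Spoly_Cmat_iff mem_Ppoly_iff)
  then show "card (labelsQ A y) \<le> CARD('n)"
    using S[rule_format, of "vec_join 0 y"]
    by (simp add: card_tight_Spoly_Cmat card_labelsP card_UNIV_sum)
qed

definition S_normal :: "real^'d^'d \<Rightarrow> 'd + 'd \<Rightarrow> real^'d" where
  "S_normal C r = (case r of Inl k \<Rightarrow> - axis k 1 | Inr k \<Rightarrow> row k C)"

definition S_rhs :: "'d + 'd \<Rightarrow> real" where
  "S_rhs r = (case r of Inl k \<Rightarrow> 0 | Inr k \<Rightarrow> 1)"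

lemma inner_row: "inner (row k C) z = (C *v z) $ k"
  by (simp add: inner_vec_def row_def matrix_vector_mult_def)

lemma Spoly_eq_ineqs: "Spoly C = ineqs UNIV (S_normal C) S_rhs"
  by (auto simp: Spoly_def ineqs_def split_sum_all S_normal_def S_rhs_def inner_axis' inner_row)

lemma tight_Spoly:
  "tight UNIV (S_normal C) S_rhs z = Inl ` {k. z $ k = 0} \<union> Inr ` {k. (C *v z) $ k = 1}"
  unfolding tight_def by (subst Collect_sum_eq) (simp add: S_normal_def S_rhs_def inner_axis' inner_row)

lemma bounded_Spoly_Cmat:
  fixes A B :: "real^'n^'m"
  assumes "polytope (Ppoly B)" "polytope (Qpoly A)"
  shows "bounded (Spoly (Cmat A B))"
proof -
  have "Spoly (Cmat A B) \<subseteq> (\<lambda>(x, y). vec_join x y) ` (Ppoly B \<times> Qpoly A)"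
  proof
    fix z assume "z \<in> Spoly (Cmat A B)"
    then have "(vec_left z, vec_right z) \<in> Ppoly B \<times> Qpoly A" by (simp add: mem_Spoly_Cmat_iff)
    then show "z \<in> (\<lambda>(x, y). vec_join x y) ` (Ppoly B \<times> Qpoly A)"
      by (rule image_eqI[rotated]) (simp add: vec_join_left_right)
  qed
  moreover have "bounded ((\<lambda>(x, y). vec_join x y) ` (Ppoly B \<times> Qpoly A))"
  proof (rule bounded_linear_image)
    show "bounded (Ppoly B \<times> Qpoly A)" using assms by (simp add: bounded_Times polytope_imp_bounded)
    show "bounded_linear (\<lambda>(x, y). vec_join x y :: real^('m + 'n))"
      unfolding linear_conv_bounded_linear[symmetric]
      by (auto simp: linear_iff vec_eq_iff split_sum_all)
  qed
  ultimately show ?thesis by (rule bounded_subset[rotated])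
qed

lemma tight_Spoly_bounded_iff_lin_indep:
  fixes C :: "real^'d^'d"
  assumes bd: "bounded (Spoly C)"
  shows "(\<forall>z\<in>Spoly C. card {k. z $ k = 0} + card {k. (C *v z) $ k = 1} \<le> CARD('d))
    \<longleftrightarrow> (\<forall>z\<in>Spoly C. lin_indep_family (\<lambda>r. case r of Inl i \<Rightarrow> axis i 1 | Inr j \<Rightarrow> row j C)
            (Inl ` {i. z $ i = 0} \<union> Inr ` {j. (C *v z) $ j = 1}))"
proof -
  have "(\<lambda>r. case r of Inl i \<Rightarrow> axis i 1 | Inr j \<Rightarrow> row j C)
      = (\<lambda>r. (case r of Inl _ \<Rightarrow> -1 | Inr _ \<Rightarrow> 1) *\<^sub>R S_normal C r)"
    by (rule ext) (simp add: S_normal_def split: sum.splits)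
  then have li: "lin_indep_family (\<lambda>r. case r of Inl i \<Rightarrow> axis i 1 | Inr j \<Rightarrow> row j C) K
      \<longleftrightarrow> lin_indep_family (S_normal C) K" for K
    by (simp add: lin_indep_family_scaleR_iff split: sum.splits)
  have card: "card (tight UNIV (S_normal C) S_rhs z) = card {k. z $ k = 0} + card {k. (C *v z) $ k = 1}"
    for z unfolding tight_Spoly by (rule card_Inl_Un_Inr)
  have "card (tight UNIV (S_normal C) S_rhs z) \<le> DIM(real^'d)"
    if "lin_indep_family (S_normal C) (tight UNIV (S_normal C) S_rhs z)" for z
    using card_eq_dim_if_lin_indep_family[OF _ that]
      dim_subset_UNIV[of "S_normal C ` tight UNIV (S_normal C) S_rhs z"] by simp
  moreover have "\<exists>z'\<in>Spoly C. card (tight UNIV (S_normal C) S_rhs z') > DIM(real^'d)"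
    if "z \<in> Spoly C" "\<not> lin_indep_family (S_normal C) (tight UNIV (S_normal C) S_rhs z)" for z
    using ineqs_many_tight_if_not_lin_indep[of UNIV "S_normal C" S_rhs z] that bd
    by (simp add: Spoly_eq_ineqs)
  ultimately show ?thesis unfolding li tight_Spoly[symmetric] card
    by (metis DIM_cart DIM_real mult.right_neutral not_le)
qed

lemma supp_eq_Inl_Un_Inr: "supp z = Inl ` supp (vec_left z) \<union> Inr ` supp (vec_right z)"
  unfolding supp_def by (subst Collect_sum_eq) simp

lemma card_supp_vec_join: "card (supp (vec_join x y)) = card (supp x) + card (supp y)"
  by (simp add: supp_eq_Inl_Un_Inr card_Inl_Un_Inr)

lemma bestresp1_Cmat:
  "bestresp1 (Cmat A B) z = Inl ` {i. (A *v vec_right z) $ i = Max (range (\<lambda>k. (Cmat A B *v z) $ k))}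
    \<union> Inr ` {j. (transpose B *v vec_left z) $ j = Max (range (\<lambda>k. (Cmat A B *v z) $ k))}"
  unfolding bestresp1_def by (subst Collect_sum_eq) (simp add: Cmat_mult_vec)

lemma card_bestresp1_Cmat_le:
  fixes A B :: "real^'n^'m" and z :: "real^('m + 'n)"
  assumes P: "polytope (Ppoly B)" and Q: "polytope (Ppoly (transpose A))"
    and ndB: "P_nondeg B" and ndA: "P_nondeg (transpose A)" and z: "z \<in> mixed"
  shows "card (bestresp1 (Cmat A B) z) \<le> card (supp z)"
proof -
  define M where "M = Max (range (\<lambda>k. (Cmat A B *v z) $ k))"
  let ?x = "vec_left z" and ?y = "vec_right z"
  have x0: "\<forall>i. 0 \<le> ?x $ i" and y0: "\<forall>j. 0 \<le> ?y $ j" using mixed_nonneg[OF z] by simp_all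
  have le: "(Cmat A B *v z) $ k \<le> M" for k unfolding M_def by (rule Max_range_ge)
  then have leA: "(A *v ?y) $ i \<le> M" and leB: "(transpose B *v ?x) $ j \<le> M" for i j
    using le[of "Inl i"] le[of "Inr j"] by (simp_all add: Cmat_mult_vec)
  obtain k where "z $ k \<noteq> 0" using mixed_nonzero[OF z] by (metis vec_eq_iff zero_index)
  then have "?x \<noteq> 0 \<or> ?y \<noteq> 0" by (cases k) (auto simp: vec_eq_iff)
  then have M0: "M > 0"
    using exists_pos_payoff_if_polytope[OF P x0] exists_pos_payoff_if_polytope[OF Q y0] leA leB
    by (auto intro: less_le_trans)
  have "card {i. (A *v ?y) $ i = M} \<le> card (supp ?y)"
    using P_nondeg_card_max_payoffs[OF ndA y0, of M] leA M0 by simp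
  moreover have "card {j. (transpose B *v ?x) $ j = M} \<le> card (supp ?x)"
    using P_nondeg_card_max_payoffs[OF ndB x0, of M] leB M0 by simp
  ultimately show ?thesis
    unfolding bestresp1_Cmat M_def[symmetric] supp_eq_Inl_Un_Inr[of z] card_Inl_Un_Inr by linarith
qed

lemma card_bestresp1_Cmat_join_left:
  fixes A B :: "real^'n^'m"
  assumes P: "polytope (Ppoly B)" and x: "x \<in> mixed"
  shows "card (bestresp1 (Cmat A B) (vec_join x 0)) = card (bestresp2 B x)"
proof -
  obtain j0 where j0: "(transpose B *v x) $ j0 = max_payoff2 B x"
    using Max_range_attained unfolding max_payoff2_def by metis
  have M0: "max_payoff2 B x > 0" by (rule max_payoff2_pos[OF P x])
  have "(Cmat A B *v vec_join x 0) $ k \<le> max_payoff2 B x" for k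
    using M0 payoff_le_max_payoff2[of B x] by (cases k) (simp_all add: Cmat_mult_vec)
  then have "Max (range (\<lambda>k. (Cmat A B *v vec_join x 0) $ k)) = max_payoff2 B x"
    by (rule Max_range_eqI[of _ _ "Inr j0"]) (simp add: Cmat_mult_vec j0)
  then show ?thesis using M0 by (simp add: bestresp1_Cmat bestresp2_eq card_image)
qed

lemma card_bestresp1_Cmat_join_right:
  fixes A B :: "real^'n^'m"
  assumes Q: "polytope (Ppoly (transpose A))" and y: "y \<in> mixed"
  shows "card (bestresp1 (Cmat A B) (vec_join 0 y)) = card (bestresp1 A y)"
proof -
  obtain i0 where i0: "(A *v y) $ i0 = max_payoff2 (transpose A) y"
    using Max_range_attained unfolding max_payoff2_def transpose_transpose by metis
  have M0: "max_payoff2 (transpose A) y > 0" by (rule max_payoff2_pos[OF Q y])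
  have "(Cmat A B *v vec_join 0 y) $ k \<le> max_payoff2 (transpose A) y" for k
    using M0 payoff_le_max_payoff2[of "transpose A" y] by (cases k) (simp_all add: Cmat_mult_vec)
  then have "Max (range (\<lambda>k. (Cmat A B *v vec_join 0 y) $ k)) = max_payoff2 (transpose A) y"
    by (rule Max_range_eqI[of _ _ "Inl i0"]) (simp add: Cmat_mult_vec i0)
  then show ?thesis
    unfolding bestresp1_Cmat using M0
    by (simp add: bestresp1_eq_bestresp2 bestresp2_eq card_image)
qed

lemma nondegenerate_iff_symmetric_nondegenerate:
  fixes A B :: "real^'n^'m"
  assumes P: "polytope (Ppoly B)" and Q: "polytope (Qpoly A)"
  shows "nondegenerate A B \<longleftrightarrow> nondegenerate (Cmat A B) (transpose (Cmat A B))"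
proof -
  have Q': "polytope (Ppoly (transpose A))" using Q by (simp add: Qpoly_eq_Ppoly)
  have sym: "nondegenerate (Cmat A B) (transpose (Cmat A B)) \<longleftrightarrow>
      (\<forall>z\<in>mixed. card (bestresp1 (Cmat A B) z) \<le> card (supp z))"
    by (simp add: nondegenerate_def bestresp1_eq_bestresp2)
  have mixed_join: "vec_join x 0 \<in> mixed" "vec_join 0 x \<in> mixed" if "x \<in> mixed" for x :: "real^'k"
    using that by (auto simp: mixed_def sum_UNIV_sum split_sum_all)
  show ?thesis
    unfolding sym nondegenerate_def[of A B]
  proof
    assume "(\<forall>x\<in>mixed. card (bestresp2 B x) \<le> card (supp x)) \<and>
        (\<forall>y\<in>mixed. card (bestresp1 A y) \<le> card (supp y))"
    then show "\<forall>z\<in>mixed. card (bestresp1 (Cmat A B) z) \<le> card (supp z)"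
      using card_bestresp1_Cmat_le[OF P Q'] by (simp add: P_nondeg_def bestresp1_eq_bestresp2)
  next
    assume S: "\<forall>z\<in>mixed. card (bestresp1 (Cmat A B) z) \<le> card (supp z)"
    have "card (bestresp2 B x) \<le> card (supp x)" if "x \<in> mixed" for x :: "real^'m"
      using S mixed_join[OF that] card_bestresp1_Cmat_join_left[OF P that, of A]
        card_supp_vec_join[of x "0::real^'n"] by (fastforce simp: supp_def)
    moreover have "card (bestresp1 A y) \<le> card (supp y)" if "y \<in> mixed" for y :: "real^'n"
      using S mixed_join[OF that] card_bestresp1_Cmat_join_right[OF Q' that, of B]
        card_supp_vec_join[of "0::real^'m" y] by (fastforce simp: supp_def)
    ultimately show "(\<forall>x\<in>mixed. card (bestresp2 B x) \<le> card (supp x)) \<and>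
        (\<forall>y\<in>mixed. card (bestresp1 A y) \<le> card (supp y))" by blast
  qed
qed

theorem mainTheorem11:
  fixes A B :: "real^'n^'m"
  assumes polyP: "polytope (Ppoly B)"
      and polyQ: "polytope (Qpoly A)"
  shows
   "(nondegenerate A B \<longleftrightarrow>
       ((\<forall>x\<in>Ppoly B. card (labelsP B x) \<le> CARD('m)) \<and>
        (\<forall>y\<in>Qpoly A. card (labelsQ A y) \<le> CARD('n)))) \<and>
    (nondegenerate A B \<longleftrightarrow> nondegenerate (Cmat A B) (transpose (Cmat A B))) \<and>
    (nondegenerate A B \<longleftrightarrow>
       (\<forall>z\<in>Spoly (Cmat A B).
          card {k. z $ k = 0} + card {k. (Cmat A B *v z) $ k = 1} \<le> CARD('m + 'n))) \<and>
    (nondegenerate A B \<longleftrightarrow>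
       (\<forall>z\<in>Spoly (Cmat A B).
          lin_indep_family
            (\<lambda>r. case r of Inl i \<Rightarrow> axis i 1 | Inr j \<Rightarrow> row j (Cmat A B))
            (Inl ` {i. z $ i = 0} \<union> Inr ` {j. (Cmat A B *v z) $ j = 1}))) \<and>
    (nondegenerate A B \<longleftrightarrow>
       (\<forall>xh\<in>mixed. \<forall>yh\<in>mixed.
          lin_indep_family (\<lambda>j. \<chi> i. if i \<in> supp xh then B $ i $ j else 0)
                           (bestresp2 B xh) \<and>
          lin_indep_family (\<lambda>i. \<chi> j. if j \<in> supp yh then A $ i $ j else 0)
                           (bestresp1 A yh))) \<and>
    (nondegenerate A B \<longleftrightarrow>
       (\<forall>xh\<in>mixed. \<forall>yh\<in>mixed.
          aff_dim (PI B (labelsX B xh)) = int CARD('m) - int (card (labelsX B xh)) \<and>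
          aff_dim (QJ A (labelsY A yh)) = int CARD('n) - int (card (labelsY A yh)))) \<and>
    (nondegenerate A B \<longleftrightarrow>
       (simple_polytope (Ppoly B) \<and> simple_polytope (Qpoly A) \<and>
        (\<forall>l. P_redundant B l \<longrightarrow> (\<forall>x\<in>Ppoly B. \<not> Pbind B l x)) \<and>
        (\<forall>l. Q_redundant A l \<longrightarrow> (\<forall>y\<in>Qpoly A. \<not> Qbind A l y)))) \<and>
    (nondegenerate A B \<longleftrightarrow>
       (simple_polytope (Ppoly B) \<and> simple_polytope (Qpoly A) \<and>
        (\<forall>i. (\<exists>x\<in>mixed. x \<noteq> axis i 1 \<and> (\<forall>j. A $ i $ j \<le> (x v* A) $ j)) \<longrightarrow>
             (\<exists>x'\<in>mixed. \<forall>j. A $ i $ j < (x' v* A) $ j)) \<and>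
        (\<forall>j. (\<exists>y\<in>mixed. y \<noteq> axis j 1 \<and> (\<forall>i. B $ i $ j \<le> (B *v y) $ i)) \<longrightarrow>
             (\<exists>y'\<in>mixed. \<forall>i. B $ i $ j < (B *v y') $ i))))"
proof -
  have d: "nondegenerate A B \<longleftrightarrow>
      (\<forall>z\<in>Spoly (Cmat A B). card {k. z $ k = 0} + card {k. (Cmat A B *v z) $ k = 1} \<le> CARD('m + 'n))"
    using nondegenerate_iff_labels_bounded[OF polyP polyQ] labels_bounded_iff_tight_Spoly_bounded
    by simp
  show ?thesis
    using nondegenerate_iff_labels_bounded[OF polyP polyQ]
      nondegenerate_iff_symmetric_nondegenerate[OF polyP polyQ] d
      tight_Spoly_bounded_iff_lin_indep[OF bounded_Spoly_Cmat[OF polyP polyQ]]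
      nondegenerate_iff_lin_indep_submatrices[OF polyP polyQ]
      nondegenerate_iff_aff_dim[OF polyP polyQ]
      nondegenerate_iff_simple_redundant_nonbinding[OF polyP polyQ]
      nondegenerate_iff_simple_dominance[OF polyP polyQ]
    by blast
qed

end
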